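(* Let $A$, $B$, $C$, and $D$ be finite posets, with $A$ connected and non-empty. Assume that $A\times B\cong C\times D$. Then there exist posets $W$, $X$, $Y$, and $Z$ such that $A\cong W\times X$, $B\cong Y\times Z$, $C\cong W\times Y$, and $D\cong X\times Z$.
   Context: Products of posets are ordered componentwise; posets may be empty. *)

theory Defs
  imports Main
begin

text \<open>A poset is given by a carrier set S and an order relation r \<subseteq> S \<times> S
  (library notion partial_order_on: reflexive on S, transitive, antisymmetric).\<close>

definition prod_order :: "('a \<times> 'a) set \<Rightarrow> ('b \<times> 'b) set \<Rightarrow> (('a \<times> 'b) \<times> ('a \<times> 'b)) set" where
  "prod_order r s = {((a, b), (a', b')). (a, a') \<in> r \<and> (b, b') \<in> s}"

definition order_iso :: "'a set \<Rightarrow> ('a \<times> 'a) set \<Rightarrow> 'b set \<Rightarrow> ('b \<times> 'b) set \<Rightarrow> bool" where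
  "order_iso S r T s \<longleftrightarrow> (\<exists>f. bij_betw f S T \<and>
      (\<forall>x\<in>S. \<forall>y\<in>S. (x, y) \<in> r \<longleftrightarrow> (f x, f y) \<in> s))"

definition connected_poset :: "'a set \<Rightarrow> ('a \<times> 'a) set \<Rightarrow> bool" where
  "connected_poset S r \<longleftrightarrow> (\<forall>x\<in>S. \<forall>y\<in>S. (x, y) \<in> (r \<union> r\<inverse>)\<^sup>*)"

end

(* As A is connected, the components of A \<times> B are the sets A \<times> B' for the components B' of B,
   and the isomorphism matches them with the products C' \<times> D' of components of C and D.  It
   therefore suffices to refine a whole family of isomorphisms A \<times> B j k \<cong> C j \<times> D k
   between connected posets by one pair W, X with A \<cong> W \<times> X, C j \<cong> W \<times> Y j,
   D k \<cong> X \<times> Z k and B j k \<cong> Y j \<times> Z k; disjoint unions of the Y j and the Z k then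
   give Y and Z.

   For connected posets, Hashimoto's refinement theorem refines any two factorisations of the
   same poset, and yields cancellation of connected factors.  The family is refined by induction
   on |A|: an indecomposable factor P of A divides, by refinement, either every C j or every
   D k, and cancelling P everywhere leaves a smaller instance. *)

theory Submission
  imports Defs "HOL-Library.Disjoint_Sets"
begin

section \<open>Posets and order isomorphisms\<close>

lemma prod_order_iff [simp]:
  "((a, b), (a', b')) \<in> prod_order r s \<longleftrightarrow> (a, a') \<in> r \<and> (b, b') \<in> s"
  by (simp add: prod_order_def)

lemma converse_prod_order: "(prod_order r s)\<inverse> = prod_order (r\<inverse>) (s\<inverse>)"
  by (auto simp: prod_order_def)

lemma partial_order_on_reflD: "partial_order_on S r \<Longrightarrow> x \<in> S \<Longrightarrow> (x, x) \<in> r"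
  by (meson partial_order_onD(1) refl_onD)

lemma partial_order_on_transD:
  "partial_order_on S r \<Longrightarrow> (x, y) \<in> r \<Longrightarrow> (y, z) \<in> r \<Longrightarrow> (x, z) \<in> r"
  by (meson partial_order_onD(2) transD)

lemma partial_order_on_antisymD:
  "partial_order_on S r \<Longrightarrow> (x, y) \<in> r \<Longrightarrow> (y, x) \<in> r \<Longrightarrow> x = y"
  by (meson partial_order_onD(3) antisymD)

lemma partial_order_on_memD: "partial_order_on S r \<Longrightarrow> (x, y) \<in> r \<Longrightarrow> x \<in> S \<and> y \<in> S"
  using partial_order_onD(4) by blast

lemma partial_order_onI:
  assumes "r \<subseteq> S \<times> S" "\<And>x. x \<in> S \<Longrightarrow> (x, x) \<in> r"
    and "\<And>x y z. (x, y) \<in> r \<Longrightarrow> (y, z) \<in> r \<Longrightarrow> (x, z) \<in> r"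
    and "\<And>x y. (x, y) \<in> r \<Longrightarrow> (y, x) \<in> r \<Longrightarrow> x = y"
  shows "partial_order_on S r"
  using assms unfolding partial_order_on_def preorder_on_def refl_on_def trans_def antisym_def
  by blast

lemma partial_order_on_prod_order:
  assumes "partial_order_on S r" "partial_order_on T s"
  shows "partial_order_on (S \<times> T) (prod_order r s)"
  by (rule partial_order_onI)
    (use partial_order_onD(4)[OF assms(1)] partial_order_onD(4)[OF assms(2)] in
      \<open>auto simp: prod_order_def intro: partial_order_on_reflD[OF assms(1)]
        partial_order_on_reflD[OF assms(2)] partial_order_on_transD[OF assms(1)]
        partial_order_on_transD[OF assms(2)] partial_order_on_antisymD[OF assms(1)]
        partial_order_on_antisymD[OF assms(2)]\<close>)

lemma partial_order_on_Restr:
  "partial_order_on S r \<Longrightarrow> S' \<subseteq> S \<Longrightarrow> partial_order_on S' (Restr r S')"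
  by (rule partial_order_onI)
    (auto dest: partial_order_on_transD partial_order_on_antisymD intro: partial_order_on_reflD)

lemma partial_order_on_singleton: "partial_order_on {x} {(x, x)}"
  by (rule partial_order_onI) auto

lemma partial_order_on_card_1:
  assumes "card P = 1" "partial_order_on P r"
  obtains p where "P = {p}" "r = {(p, p)}"
proof -
  obtain p where p: "P = {p}" using assms(1) card_1_singletonE by blast
  then have "r = {(p, p)}"
    using partial_order_onD(4)[OF assms(2)] partial_order_on_reflD[OF assms(2)] by auto
  with p that show thesis by blast
qed

lemma order_isoI:
  assumes "bij_betw f S T" "\<And>x y. x \<in> S \<Longrightarrow> y \<in> S \<Longrightarrow> (x, y) \<in> r \<longleftrightarrow> (f x, f y) \<in> s"
  shows "order_iso S r T s"
  using assms unfolding order_iso_def by blast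

lemma order_isoE:
  assumes "order_iso S r T s"
  obtains f where "bij_betw f S T" "\<And>x y. x \<in> S \<Longrightarrow> y \<in> S \<Longrightarrow> (x, y) \<in> r \<longleftrightarrow> (f x, f y) \<in> s"
  using assms unfolding order_iso_def by blast

lemma order_iso_refl: "order_iso S r S r"
  by (rule order_isoI[of id]) auto

lemma order_iso_sym:
  assumes "order_iso S r T s"
  shows "order_iso T s S r"
proof -
  obtain f where f: "bij_betw f S T" "\<And>x y. x \<in> S \<Longrightarrow> y \<in> S \<Longrightarrow> (x, y) \<in> r \<longleftrightarrow> (f x, f y) \<in> s"
    using assms by (auto elim: order_isoE)
  show ?thesis
  proof (rule order_isoI[OF bij_betw_inv_into[OF f(1)]])
    fix x y assume "x \<in> T" "y \<in> T"
    then show "(x, y) \<in> s \<longleftrightarrow> (inv_into S f x, inv_into S f y) \<in> r"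
      using f by (auto simp: bij_betw_def inv_into_into f_inv_into_f)
  qed
qed

lemma order_iso_trans:
  assumes "order_iso S r T s" "order_iso T s U u"
  shows "order_iso S r U u"
proof -
  obtain f where f: "bij_betw f S T" "\<And>x y. x \<in> S \<Longrightarrow> y \<in> S \<Longrightarrow> (x, y) \<in> r \<longleftrightarrow> (f x, f y) \<in> s"
    using assms(1) by (auto elim: order_isoE)
  obtain g where g: "bij_betw g T U" "\<And>x y. x \<in> T \<Longrightarrow> y \<in> T \<Longrightarrow> (x, y) \<in> s \<longleftrightarrow> (g x, g y) \<in> u"
    using assms(2) by (auto elim: order_isoE)
  show ?thesis
    by (rule order_isoI[OF bij_betw_trans[OF f(1) g(1)]])
      (use f g bij_betwE in \<open>simp, blast\<close>)
qed

lemma order_iso_prod: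
  assumes "order_iso S r S' r'" "order_iso T s T' s'"
  shows "order_iso (S \<times> T) (prod_order r s) (S' \<times> T') (prod_order r' s')"
proof -
  obtain f where f: "bij_betw f S S'" "\<And>x y. x \<in> S \<Longrightarrow> y \<in> S \<Longrightarrow> (x, y) \<in> r \<longleftrightarrow> (f x, f y) \<in> r'"
    using assms(1) by (auto elim: order_isoE)
  obtain g where g: "bij_betw g T T'" "\<And>x y. x \<in> T \<Longrightarrow> y \<in> T \<Longrightarrow> (x, y) \<in> s \<longleftrightarrow> (g x, g y) \<in> s'"
    using assms(2) by (auto elim: order_isoE)
  show ?thesis
    by (rule order_isoI[OF bij_betw_map_prod[OF f(1) g(1)]]) (use f(2) g(2) in auto)
qed

lemma order_iso_prod_swap: "order_iso (S \<times> T) (prod_order r s) (T \<times> S) (prod_order s r)"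
  by (rule order_isoI[of prod.swap]) (auto simp: bij_betw_def)

lemma order_iso_prod_assoc:
  "order_iso ((S \<times> T) \<times> U) (prod_order (prod_order r s) t) (S \<times> (T \<times> U)) (prod_order r (prod_order s t))"
  by (rule order_isoI[of "\<lambda>((a, b), c). (a, (b, c))"]) (auto intro: bij_betwI')

lemma order_iso_prod_left_commute:
  "order_iso (S \<times> (T \<times> U)) (prod_order r (prod_order s t)) (T \<times> (S \<times> U)) (prod_order s (prod_order r t))"
  by (rule order_isoI[of "\<lambda>(a, b, c). (b, a, c)"]) (auto intro: bij_betwI')

lemma order_iso_of_surjections:
  assumes "\<Phi> ` X = S" "\<Psi> ` X = U"
    and "\<And>x y. x \<in> X \<Longrightarrow> y \<in> X \<Longrightarrow> \<Phi> x = \<Phi> y \<longleftrightarrow> \<Psi> x = \<Psi> y"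
    and "\<And>x y. x \<in> X \<Longrightarrow> y \<in> X \<Longrightarrow> (\<Phi> x, \<Phi> y) \<in> r \<longleftrightarrow> (\<Psi> x, \<Psi> y) \<in> u"
  shows "order_iso S r U u"
proof -
  let ?\<sigma> = "inv_into X \<Phi>"
  have \<sigma>: "?\<sigma> s \<in> X" "\<Phi> (?\<sigma> s) = s" if "s \<in> S" for s
    using that assms(1) by (auto intro: inv_into_into f_inv_into_f)
  show ?thesis
  proof (rule order_isoI[of "\<Psi> \<circ> ?\<sigma>"])
    show "bij_betw (\<Psi> \<circ> ?\<sigma>) S U"
    proof (rule bij_betw_imageI)
      show "inj_on (\<Psi> \<circ> ?\<sigma>) S"
        using \<sigma> assms(3) by (fastforce simp: inj_on_def)
      show "(\<Psi> \<circ> ?\<sigma>) ` S = U"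
      proof
        show "(\<Psi> \<circ> ?\<sigma>) ` S \<subseteq> U"
          using \<sigma> assms(2) by auto
        show "U \<subseteq> (\<Psi> \<circ> ?\<sigma>) ` S"
        proof
          fix u assume "u \<in> U"
          then obtain x where x: "x \<in> X" "u = \<Psi> x"
            using assms(2) by blast
          have "\<Phi> x \<in> S"
            using assms(1) x(1) by blast
          moreover have "\<Psi> (?\<sigma> (\<Phi> x)) = u"
            using assms(3)[of "?\<sigma> (\<Phi> x)" x] \<sigma>[OF \<open>\<Phi> x \<in> S\<close>] x by simp
          ultimately show "u \<in> (\<Psi> \<circ> ?\<sigma>) ` S"
            by force
        qed
      qed
    qed
  next
    fix s s' assume "s \<in> S" "s' \<in> S"
    then show "(s, s') \<in> r \<longleftrightarrow> ((\<Psi> \<circ> ?\<sigma>) s, (\<Psi> \<circ> ?\<sigma>) s') \<in> u"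
      using \<sigma> assms(4)[of "?\<sigma> s" "?\<sigma> s'"] by simp
  qed
qed

lemma order_iso_card: "order_iso S r T s \<Longrightarrow> card S = card T"
  by (metis order_isoE bij_betw_same_card)

lemma order_iso_finite_iff: "order_iso S r T s \<Longrightarrow> finite S \<longleftrightarrow> finite T"
  by (metis order_isoE bij_betw_finite)

lemma order_iso_empty_iff: "order_iso S r T s \<Longrightarrow> S = {} \<longleftrightarrow> T = {}"
  by (metis order_isoE bij_betw_empty1 bij_betw_empty2)

lemma order_iso_cong:
  assumes "order_iso S r T s"
    and "\<And>x y. x \<in> S \<Longrightarrow> y \<in> S \<Longrightarrow> (x, y) \<in> r \<longleftrightarrow> (x, y) \<in> r'"
    and "\<And>x y. x \<in> T \<Longrightarrow> y \<in> T \<Longrightarrow> (x, y) \<in> s \<longleftrightarrow> (x, y) \<in> s'"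
  shows "order_iso S r' T s'"
  using assms unfolding order_iso_def bij_betw_def by (metis image_eqI)

lemma order_iso_Restr_left_iff: "order_iso S (Restr r S) T s \<longleftrightarrow> order_iso S r T s"
  by (auto elim: order_iso_cong)

lemma order_iso_prod_Restr_iff:
  "order_iso M m (S \<times> T) (prod_order (Restr r S) (Restr s T)) \<longleftrightarrow> order_iso M m (S \<times> T) (prod_order r s)"
  by (auto elim: order_iso_cong)

lemma partial_order_on_order_iso:
  assumes "order_iso S r T s" "partial_order_on S r" "s \<subseteq> T \<times> T"
  shows "partial_order_on T s"
proof -
  obtain g where g: "bij_betw g T S" "\<And>x y. x \<in> T \<Longrightarrow> y \<in> T \<Longrightarrow> (x, y) \<in> s \<longleftrightarrow> (g x, g y) \<in> r"
    using order_iso_sym[OF assms(1)] by (auto elim: order_isoE)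
  have g_mem: "\<And>x. x \<in> T \<Longrightarrow> g x \<in> S" and g_inj: "inj_on g T"
    using g(1) by (auto simp: bij_betw_def)
  have mem: "\<And>x y. (x, y) \<in> s \<Longrightarrow> x \<in> T \<and> y \<in> T"
    using assms(3) by blast
  show ?thesis
  proof (rule partial_order_onI)
    fix x assume "x \<in> T"
    then show "(x, x) \<in> s"
      using g(2) g_mem partial_order_on_reflD[OF assms(2)] by blast
  next
    fix x y z assume "(x, y) \<in> s" "(y, z) \<in> s"
    then show "(x, z) \<in> s"
      using mem g(2) partial_order_on_transD[OF assms(2)] by meson
  next
    fix x y assume "(x, y) \<in> s" "(y, x) \<in> s"
    then show "x = y"
      using mem g(2) g_inj partial_order_on_antisymD[OF assms(2)] by (meson inj_onD)
  qed (fact assms(3))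
qed

lemma order_iso_unit_prod:
  assumes "card P = 1" "partial_order_on P p"
  shows "order_iso (P \<times> S) (prod_order p r) S r"
proof -
  obtain x where "P = {x}" "p = {(x, x)}"
    using assms by (rule partial_order_on_card_1)
  then show ?thesis
    by (intro order_isoI[of snd]) (auto simp: bij_betw_def inj_on_def)
qed

lemma order_iso_prod_unit:
  "card P = 1 \<Longrightarrow> partial_order_on P p \<Longrightarrow> order_iso (S \<times> P) (prod_order r p) S r"
  using order_iso_trans[OF order_iso_prod_swap order_iso_unit_prod] .

lemma order_iso_card_1:
  assumes "card S = 1" "partial_order_on S r" "card T = 1" "partial_order_on T s"
  shows "order_iso S r T s"
  using order_iso_trans[OF order_iso_sym[OF order_iso_prod_unit[OF assms(3,4)]]
      order_iso_unit_prod[OF assms(1,2)]] .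

lemma order_iso_nat:
  assumes "partial_order_on S r" "finite S"
  obtains N :: "nat set" and n where "partial_order_on N n" "finite N" "order_iso S r N n"
proof -
  obtain e :: "'a \<Rightarrow> nat" where e: "inj_on e S"
    using finite_imp_inj_to_nat_seg[OF assms(2)] by blast
  let ?n = "map_prod e e ` Restr r S"
  have "inj_on (map_prod e e) (S \<times> S)"
    using e by (auto simp: inj_on_def)
  then have "(e x, e y) \<in> ?n \<longleftrightarrow> (x, y) \<in> r" if "x \<in> S" "y \<in> S" for x y
    using inj_on_image_mem_iff[of "map_prod e e" "S \<times> S" "(x, y)" "Restr r S"] that by auto
  then have iso: "order_iso S r (e ` S) ?n"
    by (intro order_isoI[of e]) (use e in \<open>auto simp: bij_betw_def\<close>)
  moreover have "partial_order_on (e ` S) ?n"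
    by (rule partial_order_on_order_iso[OF iso assms(1)]) auto
  ultimately show thesis
    using that assms(2) by blast
qed

section \<open>Connectedness\<close>

lemma rtrancl_Un_converse_map:
  assumes "(x, y) \<in> (r \<union> r\<inverse>)\<^sup>*" "\<And>u v. (u, v) \<in> r \<Longrightarrow> (f u, f v) \<in> s"
  shows "(f x, f y) \<in> (s \<union> s\<inverse>)\<^sup>*"
  using assms(1)
proof (induction rule: rtrancl_induct)
  case (step y z)
  then have "(f y, f z) \<in> s \<union> s\<inverse>"
    using assms(2) by blast
  with step.IH show ?case
    by (rule rtrancl_into_rtrancl)
qed simp

lemma connected_poset_converse [simp]: "connected_poset S (r\<inverse>) \<longleftrightarrow> connected_poset S r"
  by (simp add: connected_poset_def Un_commute)

lemma connected_poset_order_iso: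
  assumes "order_iso S r T s" "r \<subseteq> S \<times> S" "connected_poset S r"
  shows "connected_poset T s"
  unfolding connected_poset_def
proof (intro ballI)
  obtain f where f: "bij_betw f S T" "\<And>x y. x \<in> S \<Longrightarrow> y \<in> S \<Longrightarrow> (x, y) \<in> r \<longleftrightarrow> (f x, f y) \<in> s"
    using assms(1) by (auto elim: order_isoE)
  fix x y assume "x \<in> T" "y \<in> T"
  then obtain a b where "a \<in> S" "b \<in> S" "x = f a" "y = f b"
    using f(1) by (auto simp: bij_betw_def)
  moreover have "(f u, f v) \<in> s" if "(u, v) \<in> r" for u v
    using that assms(2) f(2) by blast
  ultimately show "(x, y) \<in> (s \<union> s\<inverse>)\<^sup>*"
    using assms(3) rtrancl_Un_converse_map unfolding connected_poset_def by metis
qed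

lemma connected_poset_prod:
  assumes "partial_order_on S r" "partial_order_on T s" "connected_poset S r" "connected_poset T s"
  shows "connected_poset (S \<times> T) (prod_order r s)"
  unfolding connected_poset_def
proof (intro ballI, clarify)
  let ?p = "prod_order r s"
  fix a b a' b' assume "a \<in> S" "b \<in> T" "a' \<in> S" "b' \<in> T"
  have "((a, b), (a', b)) \<in> (?p \<union> ?p\<inverse>)\<^sup>*"
    using rtrancl_Un_converse_map[of a a' r "\<lambda>u. (u, b)" ?p] assms(3) \<open>a \<in> S\<close> \<open>a' \<in> S\<close>
      partial_order_on_reflD[OF assms(2) \<open>b \<in> T\<close>] unfolding connected_poset_def by simp
  also have "((a', b), (a', b')) \<in> (?p \<union> ?p\<inverse>)\<^sup>*"
    using rtrancl_Un_converse_map[of b b' s "\<lambda>u. (a', u)" ?p] assms(4) \<open>b \<in> T\<close> \<open>b' \<in> T\<close>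
      partial_order_on_reflD[OF assms(1) \<open>a' \<in> S\<close>] unfolding connected_poset_def by simp
  finally show "((a, b), (a', b')) \<in> (?p \<union> ?p\<inverse>)\<^sup>*" .
qed

lemma rtrancl_prod_order_fst:
  "(x, y) \<in> (prod_order r s \<union> (prod_order r s)\<inverse>)\<^sup>* \<Longrightarrow> (fst x, fst y) \<in> (r \<union> r\<inverse>)\<^sup>*"
  by (rule rtrancl_Un_converse_map) (auto simp: prod_order_def)

lemma rtrancl_prod_order_snd:
  "(x, y) \<in> (prod_order r s \<union> (prod_order r s)\<inverse>)\<^sup>* \<Longrightarrow> (snd x, snd y) \<in> (s \<union> s\<inverse>)\<^sup>*"
  by (rule rtrancl_Un_converse_map) (auto simp: prod_order_def)

lemma connected_poset_prod_fstD:
  assumes "connected_poset (S \<times> T) (prod_order r s)" "T \<noteq> {}"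
  shows "connected_poset S r"
  using assms rtrancl_prod_order_fst[of "(_, _)" "(_, _)"] unfolding connected_poset_def by fastforce

lemma connected_poset_prod_sndD:
  assumes "connected_poset (S \<times> T) (prod_order r s)" "S \<noteq> {}"
  shows "connected_poset T s"
  using assms rtrancl_prod_order_snd[of "(_, _)" "(_, _)"] unfolding connected_poset_def by fastforce

text \<open>Nonemptiness is part of the notion: no cancellation is possible by an empty factor.\<close>

definition finite_connected_poset :: "'a set \<Rightarrow> 'a rel \<Rightarrow> bool" where
  "finite_connected_poset S r \<longleftrightarrow> partial_order_on S r \<and> finite S \<and> connected_poset S r \<and> S \<noteq> {}"

lemma finite_connected_poset_order_iso:
  assumes "finite_connected_poset S r" "order_iso S r T s" "s \<subseteq> T \<times> T"
  shows "finite_connected_poset T s"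
  using assms partial_order_on_order_iso connected_poset_order_iso[OF assms(2)]
    order_iso_finite_iff order_iso_empty_iff partial_order_onD(4)
  unfolding finite_connected_poset_def by metis

lemma finite_connected_poset_prod:
  "finite_connected_poset S r \<Longrightarrow> finite_connected_poset T s \<Longrightarrow>
    finite_connected_poset (S \<times> T) (prod_order r s)"
  unfolding finite_connected_poset_def
  using partial_order_on_prod_order connected_poset_prod by auto

lemma finite_connected_poset_factors:
  assumes "finite_connected_poset M m" "order_iso M m (S \<times> T) (prod_order r s)"
    and "partial_order_on S r" "partial_order_on T s"
  shows "finite_connected_poset S r" "finite_connected_poset T s"
proof -
  have "finite_connected_poset (S \<times> T) (prod_order r s)"
    using finite_connected_poset_order_iso[OF assms(1,2)]
      partial_order_onD(4)[OF partial_order_on_prod_order[OF assms(3,4)]] by blast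
  then have "S \<noteq> {}" "T \<noteq> {}" "finite S" "finite T" "connected_poset (S \<times> T) (prod_order r s)"
    unfolding finite_connected_poset_def
    by (auto dest: finite_cartesian_productD1 finite_cartesian_productD2)
  then show "finite_connected_poset S r" "finite_connected_poset T s"
    using assms(3,4) connected_poset_prod_fstD connected_poset_prod_sndD
    unfolding finite_connected_poset_def by blast+
qed

lemma finite_connected_poset_order_iso_nat:
  assumes "finite_connected_poset S r"
  obtains N :: "nat set" and n where "finite_connected_poset N n" "order_iso S r N n"
  using assms finite_connected_poset_order_iso order_iso_nat partial_order_onD(4)
  unfolding finite_connected_poset_def by metis

section \<open>Hashimoto's refinement theorem for connected posets\<close>

locale connected_product_iso =
  fixes Q :: "'q set" and rQ and R :: "'r set" and rR
    and S :: "'s set" and rS and T :: "'t set" and rT and f :: "'q \<times> 'r \<Rightarrow> 's \<times> 't"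
  assumes po_Q: "partial_order_on Q rQ" and po_R: "partial_order_on R rR"
    and po_S: "partial_order_on S rS" and po_T: "partial_order_on T rT"
    and conn_Q: "connected_poset Q rQ" and conn_R: "connected_poset R rR"
    and Q_ne: "Q \<noteq> {}" and R_ne: "R \<noteq> {}"
    and bij: "bij_betw f (Q \<times> R) (S \<times> T)"
    and order_iff: "\<And>x y. x \<in> Q \<times> R \<Longrightarrow> y \<in> Q \<times> R \<Longrightarrow>
      (x, y) \<in> prod_order rQ rR \<longleftrightarrow> (f x, f y) \<in> prod_order rS rT"
begin

lemma swap_factors: "connected_product_iso R rR Q rQ S rS T rT (\<lambda>(r, q). f (q, r))"
proof unfold_locales
  have "bij_betw (f \<circ> prod.swap) (R \<times> Q) (S \<times> T)"
    by (rule bij_betw_trans[OF _ bij]) (auto simp: bij_betw_def)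
  moreover have "f \<circ> prod.swap = (\<lambda>(r, q). f (q, r))"
    by auto
  ultimately show "bij_betw (\<lambda>(r, q). f (q, r)) (R \<times> Q) (S \<times> T)"
    by simp
next
  fix x y assume "x \<in> R \<times> Q" "y \<in> R \<times> Q"
  then show "(x, y) \<in> prod_order rR rQ \<longleftrightarrow>
      ((case x of (r, q) \<Rightarrow> f (q, r)), (case y of (r, q) \<Rightarrow> f (q, r))) \<in> prod_order rS rT"
    using order_iff[of "prod.swap x" "prod.swap y"] by (auto simp: prod_order_def)
qed (fact po_Q po_R po_S po_T conn_Q conn_R Q_ne R_ne)+

lemma swap_targets: "connected_product_iso Q rQ R rR T rT S rS (\<lambda>x. prod.swap (f x))"
proof unfold_locales
  show "bij_betw (\<lambda>x. prod.swap (f x)) (Q \<times> R) (T \<times> S)"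
    using bij_betw_trans[OF bij, of prod.swap] by (auto simp: bij_betw_def comp_def)
next
  fix x y assume "x \<in> Q \<times> R" "y \<in> Q \<times> R"
  then show "(x, y) \<in> prod_order rQ rR \<longleftrightarrow> (prod.swap (f x), prod.swap (f y)) \<in> prod_order rT rS"
    using order_iff by (auto simp: prod_order_def)
qed (fact po_Q po_R po_S po_T conn_Q conn_R Q_ne R_ne)+

lemma dual: "connected_product_iso Q (rQ\<inverse>) R (rR\<inverse>) S (rS\<inverse>) T (rT\<inverse>) f"
  by unfold_locales
    (use po_Q po_R po_S po_T conn_Q conn_R Q_ne R_ne bij order_iff in
      \<open>simp_all add: converse_prod_order[symmetric]\<close>)

definition fS :: "'q \<Rightarrow> 'r \<Rightarrow> 's" where "fS q r = fst (f (q, r))"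
definition fT :: "'q \<Rightarrow> 'r \<Rightarrow> 't" where "fT q r = snd (f (q, r))"

lemma f_eq: "f (q, r) = (fS q r, fT q r)"
  by (simp add: fS_def fT_def)

lemma fS_mem: "q \<in> Q \<Longrightarrow> r \<in> R \<Longrightarrow> fS q r \<in> S"
  and fT_mem: "q \<in> Q \<Longrightarrow> r \<in> R \<Longrightarrow> fT q r \<in> T"
  using bij_betw_apply[OF bij, of "(q, r)"] by (simp_all add: f_eq)

lemma le_iff:
  assumes "q \<in> Q" "q' \<in> Q" "r \<in> R" "r' \<in> R"
  shows "(q, q') \<in> rQ \<and> (r, r') \<in> rR \<longleftrightarrow> (fS q r, fS q' r') \<in> rS \<and> (fT q r, fT q' r') \<in> rT"
  using order_iff[of "(q, r)" "(q', r')"] assms by (simp add: f_eq)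

lemma f_inj:
  assumes "q \<in> Q" "q' \<in> Q" "r \<in> R" "r' \<in> R" "fS q r = fS q' r'" "fT q r = fT q' r'"
  shows "q = q' \<and> r = r'"
proof -
  have "f (q, r) = f (q', r')"
    using assms by (simp add: f_eq)
  with assms show ?thesis
    using inj_onD[OF bij_betw_imp_inj_on[OF bij]] by blast
qed

lemma f_surj:
  assumes "s \<in> S" "t \<in> T"
  obtains q r where "q \<in> Q" "r \<in> R" "fS q r = s" "fT q r = t"
proof -
  have "(s, t) \<in> f ` (Q \<times> R)"
    using assms bij by (simp add: bij_betw_def)
  then obtain q r where "q \<in> Q" "r \<in> R" "f (q, r) = (s, t)"
    by auto
  with that show thesis
    by (simp add: f_eq)
qed

text \<open>The key step of Hashimoto's argument: the preimage of (fS q r', fT q' r') is squeezed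
  between comparable points in both coordinates, so by antisymmetry it is (q', r').\<close>

lemma fS_eq_propagate:
  assumes "q \<in> Q" "q' \<in> Q" "r \<in> R" "r' \<in> R" "(q, q') \<in> rQ" "(r, r') \<in> rR" "fS q r = fS q' r"
  shows "fS q r' = fS q' r'"
proof -
  note refl_Q = partial_order_on_reflD[OF po_Q] and refl_R = partial_order_on_reflD[OF po_R]
  obtain a b where ab: "a \<in> Q" "b \<in> R" "fS a b = fS q r'" "fT a b = fT q' r'"
    using f_surj[OF fS_mem fT_mem] assms(1-4) by metis
  have "(fS q r, fS q r') \<in> rS" "(fT q' r, fT q' r') \<in> rT"
    using le_iff[of q q r r'] le_iff[of q' q' r r'] assms refl_Q by auto
  then have "(q', a) \<in> rQ \<and> (r, b) \<in> rR"
    using le_iff[of q' a r b] ab assms by auto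
  moreover have "(a, q') \<in> rQ \<and> (b, r') \<in> rR" "(q, a) \<in> rQ \<and> (r', b) \<in> rR"
    using le_iff[of q q' r' r'] le_iff[of a q' b r'] le_iff[of q a r' b] ab assms refl_R
      partial_order_on_reflD[OF po_S fS_mem] partial_order_on_reflD[OF po_T fT_mem] by auto
  ultimately have "a = q'" "b = r'"
    using partial_order_on_antisymD[OF po_Q] partial_order_on_antisymD[OF po_R] by auto
  with ab show ?thesis by simp
qed

lemma fS_eq_propagate_comparable:
  assumes "q \<in> Q" "q' \<in> Q" "r \<in> R" "r' \<in> R" "(q, q') \<in> rQ" "(r, r') \<in> rR \<union> rR\<inverse>"
    and "fS q r = fS q' r"
  shows "fS q r' = fS q' r'"
proof -
  interpret dual: connected_product_iso Q "rQ\<inverse>" R "rR\<inverse>" S "rS\<inverse>" T "rT\<inverse>" f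
    by (rule dual)
  have "dual.fS = fS"
    by (simp add: fun_eq_iff dual.fS_def fS_def)
  then show ?thesis
    using fS_eq_propagate dual.fS_eq_propagate[of q' q r r'] assms by auto
qed

definition Q_equiv :: "'q \<Rightarrow> 'q \<Rightarrow> bool" where
  "Q_equiv q q' \<longleftrightarrow> (\<forall>r\<in>R. fS q r = fS q' r)"

definition R_equiv :: "'r \<Rightarrow> 'r \<Rightarrow> bool" where
  "R_equiv r r' \<longleftrightarrow> (\<forall>q\<in>Q. fS q r = fS q r')"

lemma Q_equiv_of_le:
  assumes "q \<in> Q" "q' \<in> Q" "r \<in> R" "(q, q') \<in> rQ" "fS q r = fS q' r"
  shows "Q_equiv q q'"
  unfolding Q_equiv_def
proof
  fix r' assume "r' \<in> R"
  then have "(r, r') \<in> (rR \<union> rR\<inverse>)\<^sup>*"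
    using conn_R assms(3) unfolding connected_poset_def by blast
  then have "r' \<in> R \<and> fS q r' = fS q' r'"
  proof (induction rule: rtrancl_induct)
    case (step y z)
    then have "y \<in> R" "z \<in> R"
      using partial_order_on_memD[OF po_R] by auto
    with step fS_eq_propagate_comparable assms(1,2,4) show ?case
      by blast
  qed (use assms in simp)
  then show "fS q r' = fS q' r'" ..
qed

lemma R_equiv_of_le:
  assumes "q \<in> Q" "r \<in> R" "r' \<in> R" "(r, r') \<in> rR" "fS q r = fS q r'"
  shows "R_equiv r r'"
proof -
  interpret swap: connected_product_iso R rR Q rQ S rS T rT "\<lambda>(r, q). f (q, r)"
    by (rule swap_factors)
  have "swap.fS r q = fS q r" for q r
    by (simp add: swap.fS_def fS_def)
  then show ?thesis
    using swap.Q_equiv_of_le[OF assms(2,3,1,4)] assms(5)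
    unfolding swap.Q_equiv_def R_equiv_def by simp
qed

lemma equiv_of_le:
  assumes "q \<in> Q" "q' \<in> Q" "r \<in> R" "r' \<in> R" "(q, q') \<in> rQ" "(r, r') \<in> rR"
    and "fS q r = fS q' r'"
  shows "Q_equiv q q' \<and> R_equiv r r'"
proof -
  have "(fS q r, fS q' r) \<in> rS" "(fS q' r, fS q' r') \<in> rS"
    using le_iff[of q q' r r] le_iff[of q' q' r r'] assms
      partial_order_on_reflD[OF po_Q] partial_order_on_reflD[OF po_R] by auto
  then have "fS q r = fS q' r"
    using assms(7) partial_order_on_antisymD[OF po_S] by metis
  then show ?thesis
    using Q_equiv_of_le[of q q' r] R_equiv_of_le[of q' r r'] assms by auto
qed

lemma T_connected: "connected_poset T rT"
proof -
  have "order_iso (Q \<times> R) (prod_order rQ rR) (S \<times> T) (prod_order rS rT)"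
    by (rule order_isoI[OF bij order_iff])
  then have "connected_poset (S \<times> T) (prod_order rS rT)"
    using connected_poset_order_iso partial_order_onD(4)[OF partial_order_on_prod_order[OF po_Q po_R]]
      connected_poset_prod[OF po_Q po_R conn_Q conn_R] by blast
  moreover have "S \<noteq> {}"
    using fS_mem Q_ne R_ne by blast
  ultimately show ?thesis
    by (rule connected_poset_prod_sndD)
qed

text \<open>Walk along a zigzag of T inside the fibre of fS over fS q r: consecutive preimages are
  comparable, so \<open>equiv_of_le\<close> applies at each step.\<close>

lemma equiv_of_fS_eq:
  assumes "q \<in> Q" "q' \<in> Q" "r \<in> R" "r' \<in> R" "fS q r = fS q' r'"
  shows "Q_equiv q q' \<and> R_equiv r r'"
proof -
  let ?s = "fS q r"
  have s: "?s \<in> S" "(?s, ?s) \<in> rS"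
    using fS_mem assms partial_order_on_reflD[OF po_S] by auto
  have "(fT q r, fT q' r') \<in> (rT \<union> rT\<inverse>)\<^sup>*"
    using T_connected fT_mem assms unfolding connected_poset_def by blast
  then have "\<forall>a\<in>Q. \<forall>b\<in>R. fS a b = ?s \<longrightarrow> fT a b = fT q' r' \<longrightarrow> Q_equiv q a \<and> R_equiv r b"
  proof (induction rule: rtrancl_induct)
    case base
    show ?case
      using f_inj assms(1,3) by (auto simp: Q_equiv_def R_equiv_def)
  next
    case (step y z)
    show ?case
    proof (intro ballI impI)
      fix a' b' assume a'b': "a' \<in> Q" "b' \<in> R" "fS a' b' = ?s" "fT a' b' = z"
      have "y \<in> T"
        using step(2) partial_order_on_memD[OF po_T] by blast
      then obtain a b where ab: "a \<in> Q" "b \<in> R" "fS a b = ?s" "fT a b = y"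
        using f_surj s(1) by metis
      have "Q_equiv a a' \<and> R_equiv b b' \<or> Q_equiv a' a \<and> R_equiv b' b"
        using step(2) le_iff[of a a' b b'] le_iff[of a' a b' b] ab a'b' s(2)
          equiv_of_le[of a a' b b'] equiv_of_le[of a' a b' b] by auto
      then show "Q_equiv q a' \<and> R_equiv r b'"
        using step.IH ab unfolding Q_equiv_def R_equiv_def by metis
    qed
  qed
  with assms show ?thesis
    by simp
qed

lemma fS_eq_iff:
  assumes "q \<in> Q" "q' \<in> Q" "r \<in> R" "r' \<in> R"
  shows "fS q r = fS q' r' \<longleftrightarrow> Q_equiv q q' \<and> R_equiv r r'"
  using equiv_of_fS_eq[OF assms] assms unfolding Q_equiv_def R_equiv_def by metis

lemma fT_eq_imp:
  assumes "q \<in> Q" "q' \<in> Q" "r \<in> R" "r' \<in> R" "fT q r = fT q' r'"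
  shows "(\<forall>r''\<in>R. fT q r'' = fT q' r'') \<and> (\<forall>q''\<in>Q. fT q'' r = fT q'' r')"
proof -
  interpret swap: connected_product_iso Q rQ R rR T rT S rS "\<lambda>x. prod.swap (f x)"
    by (rule swap_targets)
  have "swap.fS q r = fT q r" for q r
    by (simp add: swap.fS_def fT_def)
  then show ?thesis
    using swap.equiv_of_fS_eq[OF assms(1-4)] assms(5)
    unfolding swap.Q_equiv_def swap.R_equiv_def by simp
qed

lemma Q_iso_layers:
  assumes r0: "r0 \<in> R"
  shows "order_iso Q rQ ((\<lambda>q. fS q r0) ` Q \<times> (\<lambda>q. fT q r0) ` Q) (prod_order rS rT)"
proof (rule order_isoI[of "\<lambda>q. f (q, r0)"])
  show "bij_betw (\<lambda>q. f (q, r0)) Q ((\<lambda>q. fS q r0) ` Q \<times> (\<lambda>q. fT q r0) ` Q)"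
  proof (rule bij_betwI')
    fix q q' assume "q \<in> Q" "q' \<in> Q"
    then show "f (q, r0) = f (q', r0) \<longleftrightarrow> q = q'"
      using f_inj r0 by (auto simp: f_eq)
  next
    fix y assume "y \<in> (\<lambda>q. fS q r0) ` Q \<times> (\<lambda>q. fT q r0) ` Q"
    then obtain q q' where q: "q \<in> Q" "q' \<in> Q" "y = (fS q r0, fT q' r0)"
      by auto
    obtain a b where ab: "a \<in> Q" "b \<in> R" "fS a b = fS q r0" "fT a b = fT q' r0"
      using f_surj[OF fS_mem fT_mem] q r0 by metis
    have "fS a r0 = fS q r0" "fT a r0 = fT q' r0"
      using fS_eq_iff[of a q b r0] fT_eq_imp[of a q' b r0] ab q r0 unfolding Q_equiv_def by auto
    with ab(1) q(3) show "\<exists>x\<in>Q. y = f (x, r0)"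
      by (intro bexI[of _ a]) (simp_all add: f_eq)
  qed (simp add: f_eq)
next
  fix q q' assume "q \<in> Q" "q' \<in> Q"
  then show "(q, q') \<in> rQ \<longleftrightarrow> (f (q, r0), f (q', r0)) \<in> prod_order rS rT"
    using order_iff[of "(q, r0)" "(q', r0)"] r0 partial_order_on_reflD[OF po_R r0] by simp
qed

text \<open>Comparisons in S can be read off the two layers through a common base point, because
  any two points of S have preimages with the same T-coordinate.\<close>

lemma fS_le_iff:
  assumes q0: "q0 \<in> Q" and r0: "r0 \<in> R"
    and qr: "q \<in> Q" "q' \<in> Q" "r \<in> R" "r' \<in> R"
  shows "(fS q r, fS q' r') \<in> rS \<longleftrightarrow> (fS q r0, fS q' r0) \<in> rS \<and> (fS q0 r, fS q0 r') \<in> rS"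
proof -
  let ?t = "fT q0 r0"
  obtain a b where ab: "a \<in> Q" "b \<in> R" "fS a b = fS q r" "fT a b = ?t"
    using f_surj[OF fS_mem fT_mem] q0 r0 qr by metis
  obtain a' b' where ab': "a' \<in> Q" "b' \<in> R" "fS a' b' = fS q' r'" "fT a' b' = ?t"
    using f_surj[OF fS_mem fT_mem] q0 r0 qr by metis
  have "Q_equiv a q" "R_equiv b r" "Q_equiv a' q'" "R_equiv b' r'"
    using fS_eq_iff[of a q b r] fS_eq_iff[of a' q' b' r'] ab ab' qr by auto
  then have eqS: "fS q r0 = fS a r0" "fS q' r0 = fS a' r0" "fS q0 r = fS q0 b" "fS q0 r' = fS q0 b'"
    using q0 r0 unfolding Q_equiv_def R_equiv_def by auto
  have eqT: "fT a r0 = fT a' r0" "fT q0 b = fT q0 b'"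
    using fT_eq_imp[of a a' b b'] ab ab' q0 r0 by auto
  have "(fS q r, fS q' r') \<in> rS \<longleftrightarrow> (a, a') \<in> rQ \<and> (b, b') \<in> rR"
    using le_iff[of a a' b b'] ab ab' partial_order_on_reflD[OF po_T fT_mem[OF q0 r0]] by auto
  also have "\<dots> \<longleftrightarrow> (fS a r0, fS a' r0) \<in> rS \<and> (fS q0 b, fS q0 b') \<in> rS"
    using le_iff[of a a' r0 r0] le_iff[of q0 q0 b b'] eqT ab ab' q0 r0
      partial_order_on_reflD[OF po_Q q0] partial_order_on_reflD[OF po_R r0]
      partial_order_on_reflD[OF po_T fT_mem] by auto
  finally show ?thesis
    by (simp add: eqS)
qed

lemma S_iso_layers:
  assumes q0: "q0 \<in> Q" and r0: "r0 \<in> R"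
  shows "order_iso S rS ((\<lambda>q. fS q r0) ` Q \<times> (\<lambda>r. fS q0 r) ` R) (prod_order rS rS)"
proof (rule order_iso_of_surjections[of "\<lambda>(q, r). fS q r" "Q \<times> R" _ "\<lambda>(q, r). (fS q r0, fS q0 r)"])
  show "(\<lambda>(q, r). fS q r) ` (Q \<times> R) = S"
  proof
    show "S \<subseteq> (\<lambda>(q, r). fS q r) ` (Q \<times> R)"
    proof
      fix s assume "s \<in> S"
      then obtain q r where "q \<in> Q" "r \<in> R" "fS q r = s"
        using f_surj fT_mem[OF q0 r0] by metis
      then show "s \<in> (\<lambda>(q, r). fS q r) ` (Q \<times> R)"
        by force
    qed
  qed (use fS_mem in auto)
  show "(\<lambda>(q, r). (fS q r0, fS q0 r)) ` (Q \<times> R) = (\<lambda>q. fS q r0) ` Q \<times> (\<lambda>r. fS q0 r) ` R"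
    by (simp add: image_paired_Times)
next
  fix x y assume "x \<in> Q \<times> R" "y \<in> Q \<times> R"
  then obtain q r q' r' where xy: "x = (q, r)" "y = (q', r')" "q \<in> Q" "r \<in> R" "q' \<in> Q" "r' \<in> R"
    by blast
  have "fS q r0 = fS q' r0 \<longleftrightarrow> Q_equiv q q'" "fS q0 r = fS q0 r' \<longleftrightarrow> R_equiv r r'"
    using fS_eq_iff[of q q' r0 r0] fS_eq_iff[of q0 q0 r r'] xy q0 r0
    by (simp_all add: Q_equiv_def R_equiv_def)
  then show "((case x of (q, r) \<Rightarrow> fS q r) = (case y of (q, r) \<Rightarrow> fS q r)) \<longleftrightarrow>
      ((case x of (q, r) \<Rightarrow> (fS q r0, fS q0 r)) = (case y of (q, r) \<Rightarrow> (fS q r0, fS q0 r)))"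
    and "((case x of (q, r) \<Rightarrow> fS q r), (case y of (q, r) \<Rightarrow> fS q r)) \<in> rS \<longleftrightarrow>
      ((case x of (q, r) \<Rightarrow> (fS q r0, fS q0 r)), (case y of (q, r) \<Rightarrow> (fS q r0, fS q0 r))) \<in> prod_order rS rS"
    using fS_eq_iff[of q q' r r'] fS_le_iff[OF q0 r0, of q q' r r'] xy by simp_all
qed

end

theorem connected_refinement:
  assumes "partial_order_on Q rQ" "partial_order_on R rR" "partial_order_on S rS" "partial_order_on T rT"
    and "connected_poset Q rQ" "connected_poset R rR" "Q \<noteq> {}" "R \<noteq> {}"
    and "order_iso (Q \<times> R) (prod_order rQ rR) (S \<times> T) (prod_order rS rT)"
  obtains Q1 Q2 R1 R2 where "Q1 \<subseteq> S" "Q2 \<subseteq> T" "R1 \<subseteq> S" "R2 \<subseteq> T"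
    and "order_iso Q rQ (Q1 \<times> Q2) (prod_order (Restr rS Q1) (Restr rT Q2))"
    and "order_iso R rR (R1 \<times> R2) (prod_order (Restr rS R1) (Restr rT R2))"
    and "order_iso S rS (Q1 \<times> R1) (prod_order (Restr rS Q1) (Restr rS R1))"
    and "order_iso T rT (Q2 \<times> R2) (prod_order (Restr rT Q2) (Restr rT R2))"
proof -
  obtain f where "bij_betw f (Q \<times> R) (S \<times> T)"
    "\<And>x y. x \<in> Q \<times> R \<Longrightarrow> y \<in> Q \<times> R \<Longrightarrow> (x, y) \<in> prod_order rQ rR \<longleftrightarrow> (f x, f y) \<in> prod_order rS rT"
    using assms(9) by (auto elim: order_isoE)
  with assms interpret connected_product_iso Q rQ R rR S rS T rT f
    by unfold_locales
  interpret swap_QR: connected_product_iso R rR Q rQ S rS T rT "\<lambda>(r, q). f (q, r)"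
    by (rule swap_factors)
  interpret swap_ST: connected_product_iso Q rQ R rR T rT S rS "\<lambda>x. prod.swap (f x)"
    by (rule swap_targets)
  have swapped: "swap_QR.fS r q = fS q r" "swap_QR.fT r q = fT q r" "swap_ST.fS q r = fT q r" for q r
    by (simp_all add: swap_QR.fS_def swap_QR.fT_def swap_ST.fS_def fS_def fT_def)
  obtain q0 r0 where q0: "q0 \<in> Q" and r0: "r0 \<in> R"
    using assms(7,8) by blast
  show thesis
  proof (rule that[of "(\<lambda>q. fS q r0) ` Q" "(\<lambda>q. fT q r0) ` Q" "(\<lambda>r. fS q0 r) ` R" "(\<lambda>r. fT q0 r) ` R"])
    show "order_iso Q rQ ((\<lambda>q. fS q r0) ` Q \<times> (\<lambda>q. fT q r0) ` Q)
        (prod_order (Restr rS ((\<lambda>q. fS q r0) ` Q)) (Restr rT ((\<lambda>q. fT q r0) ` Q)))"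
      using Q_iso_layers[OF r0] by (simp only: order_iso_prod_Restr_iff)
    show "order_iso R rR ((\<lambda>r. fS q0 r) ` R \<times> (\<lambda>r. fT q0 r) ` R)
        (prod_order (Restr rS ((\<lambda>r. fS q0 r) ` R)) (Restr rT ((\<lambda>r. fT q0 r) ` R)))"
      using swap_QR.Q_iso_layers[OF q0] by (simp only: order_iso_prod_Restr_iff swapped)
    show "order_iso S rS ((\<lambda>q. fS q r0) ` Q \<times> (\<lambda>r. fS q0 r) ` R)
        (prod_order (Restr rS ((\<lambda>q. fS q r0) ` Q)) (Restr rS ((\<lambda>r. fS q0 r) ` R)))"
      using S_iso_layers[OF q0 r0] by (simp only: order_iso_prod_Restr_iff)
    show "order_iso T rT ((\<lambda>q. fT q r0) ` Q \<times> (\<lambda>r. fT q0 r) ` R)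
        (prod_order (Restr rT ((\<lambda>q. fT q r0) ` Q)) (Restr rT ((\<lambda>r. fT q0 r) ` R)))"
      using swap_ST.S_iso_layers[OF q0 r0] by (simp only: order_iso_prod_Restr_iff swapped)
  qed (use fS_mem fT_mem q0 r0 in auto)
qed

lemma connected_refinement_finite:
  fixes S :: "'s set" and T :: "'t set"
  assumes "finite_connected_poset Q rQ" "finite_connected_poset R rR"
    and "partial_order_on S rS" "partial_order_on T rT"
    and "order_iso (Q \<times> R) (prod_order rQ rR) (S \<times> T) (prod_order rS rT)"
  obtains Q1 :: "'s set" and rQ1 and Q2 :: "'t set" and rQ2 and R1 :: "'s set" and rR1
    and R2 :: "'t set" and rR2
  where "finite_connected_poset Q1 rQ1" "finite_connected_poset Q2 rQ2"
    "finite_connected_poset R1 rR1" "finite_connected_poset R2 rR2"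
    "order_iso Q rQ (Q1 \<times> Q2) (prod_order rQ1 rQ2)" "order_iso R rR (R1 \<times> R2) (prod_order rR1 rR2)"
    "order_iso S rS (Q1 \<times> R1) (prod_order rQ1 rR1)" "order_iso T rT (Q2 \<times> R2) (prod_order rQ2 rR2)"
proof -
  have po: "partial_order_on Q rQ" "partial_order_on R rR" and conn: "connected_poset Q rQ" "connected_poset R rR"
    and ne: "Q \<noteq> {}" "R \<noteq> {}"
    using assms(1,2) unfolding finite_connected_poset_def by auto
  obtain Q1 Q2 R1 R2 where sub: "Q1 \<subseteq> S" "Q2 \<subseteq> T" "R1 \<subseteq> S" "R2 \<subseteq> T"
    and iso: "order_iso Q rQ (Q1 \<times> Q2) (prod_order (Restr rS Q1) (Restr rT Q2))"
      "order_iso R rR (R1 \<times> R2) (prod_order (Restr rS R1) (Restr rT R2))"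
      "order_iso S rS (Q1 \<times> R1) (prod_order (Restr rS Q1) (Restr rS R1))"
      "order_iso T rT (Q2 \<times> R2) (prod_order (Restr rT Q2) (Restr rT R2))"
    by (rule connected_refinement[OF po assms(3,4) conn ne assms(5)])
  have "partial_order_on Q1 (Restr rS Q1)" "partial_order_on Q2 (Restr rT Q2)"
    "partial_order_on R1 (Restr rS R1)" "partial_order_on R2 (Restr rT R2)"
    using partial_order_on_Restr assms(3,4) sub by blast+
  with iso(1,2) have "finite_connected_poset Q1 (Restr rS Q1)" "finite_connected_poset Q2 (Restr rT Q2)"
    "finite_connected_poset R1 (Restr rS R1)" "finite_connected_poset R2 (Restr rT R2)"
    using finite_connected_poset_factors assms(1,2) by blast+
  from this iso show thesis
    by (rule that)
qed

section \<open>Cancellation and indecomposable factors\<close>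

text \<open>All posets live in one type, so that the induction hypothesis applies to the factors
  produced by the refinement; \<open>order_iso_cancel\<close> then removes this restriction.\<close>

lemma order_iso_cancel_same_type:
  fixes P X Y :: "'a set"
  assumes "finite_connected_poset P rP" "finite_connected_poset X rX" "finite_connected_poset Y rY"
    and "order_iso (P \<times> X) (prod_order rP rX) (P \<times> Y) (prod_order rP rY)"
  shows "order_iso X rX Y rY"
  using assms
proof (induction "card P" arbitrary: P rP X rX Y rY rule: less_induct)
  case less
  have po: "partial_order_on P rP" "partial_order_on Y rY"
    using less.prems(1,3) unfolding finite_connected_poset_def by auto
  obtain P1 :: "'a set" and rP1 and P2 :: "'a set" and rP2 and X1 :: "'a set" and rX1
    and X2 :: "'a set" and rX2 where fcp: "finite_connected_poset P1 rP1"
    "finite_connected_poset P2 rP2" "finite_connected_poset X1 rX1" "finite_connected_poset X2 rX2"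
    and iso_P: "order_iso P rP (P1 \<times> P2) (prod_order rP1 rP2)"
    and iso_X: "order_iso X rX (X1 \<times> X2) (prod_order rX1 rX2)"
    and iso_P': "order_iso P rP (P1 \<times> X1) (prod_order rP1 rX1)"
    and iso_Y: "order_iso Y rY (P2 \<times> X2) (prod_order rP2 rX2)"
    by (rule connected_refinement_finite[OF less.prems(1,2) po less.prems(4)])
  have po_factors: "partial_order_on P1 rP1" "partial_order_on P2 rP2" "partial_order_on X1 rX1"
    and card_pos: "card P1 > 0" "card P2 > 0" "card X1 > 0"
    using fcp unfolding finite_connected_poset_def by auto
  have card_P: "card P = card P1 * card P2" "card P = card P1 * card X1"
    using order_iso_card[OF iso_P] order_iso_card[OF iso_P'] by (simp_all add: card_cartesian_product)
  have "order_iso X1 rX1 P2 rP2"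
  proof (cases "card P1 = 1")
    case True
    show ?thesis
      using order_iso_trans[OF order_iso_sym[OF order_iso_trans[OF iso_P' order_iso_unit_prod[OF True po_factors(1)]]]
          order_iso_trans[OF iso_P order_iso_unit_prod[OF True po_factors(1)]]] .
  next
    case False
    show ?thesis
    proof (cases "card P2 = 1")
      case True
      with card_P card_pos have "card X1 = 1"
        by simp
      with True show ?thesis
        using order_iso_card_1 po_factors(2,3) by blast
    next
      case False
      with \<open>card P1 \<noteq> 1\<close> card_P card_pos have smaller: "card P1 < card P"
        using n_less_n_mult_m[of "card P1" "card P2"] by simp
      show ?thesis
        using less.hyps[OF smaller fcp(1-3) order_iso_trans[OF order_iso_sym[OF iso_P] iso_P']]
        by (rule order_iso_sym)
    qed
  qed
  then show ?case
    using order_iso_trans[OF iso_X order_iso_trans[OF order_iso_prod[OF _ order_iso_refl] order_iso_sym[OF iso_Y]]]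
    by blast
qed

lemma order_iso_cancel:
  assumes "finite_connected_poset P rP" "finite_connected_poset X rX" "finite_connected_poset Y rY"
    and "order_iso (P \<times> X) (prod_order rP rX) (P \<times> Y) (prod_order rP rY)"
  shows "order_iso X rX Y rY"
proof -
  obtain P' :: "nat set" and rP' where P': "finite_connected_poset P' rP'" "order_iso P rP P' rP'"
    using finite_connected_poset_order_iso_nat[OF assms(1)] .
  obtain X' :: "nat set" and rX' where X': "finite_connected_poset X' rX'" "order_iso X rX X' rX'"
    using finite_connected_poset_order_iso_nat[OF assms(2)] .
  obtain Y' :: "nat set" and rY' where Y': "finite_connected_poset Y' rY'" "order_iso Y rY Y' rY'"
    using finite_connected_poset_order_iso_nat[OF assms(3)] .
  have "order_iso (P' \<times> X') (prod_order rP' rX') (P' \<times> Y') (prod_order rP' rY')"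
    using order_iso_trans[OF order_iso_sym[OF order_iso_prod[OF P'(2) X'(2)]]
        order_iso_trans[OF assms(4) order_iso_prod[OF P'(2) Y'(2)]]] .
  then have "order_iso X' rX' Y' rY'"
    by (rule order_iso_cancel_same_type[OF P'(1) X'(1) Y'(1)])
  then show ?thesis
    using order_iso_trans[OF X'(2) order_iso_trans[OF _ order_iso_sym[OF Y'(2)]]] by blast
qed

text \<open>The cofactor is a subset of C (a slice of the product), so dividing out P keeps the
  type of C.\<close>

definition poset_dvd :: "'p set \<Rightarrow> 'p rel \<Rightarrow> 'c set \<Rightarrow> 'c rel \<Rightarrow> bool" where
  "poset_dvd P rP C rC \<longleftrightarrow> (\<exists>C' \<subseteq> C. order_iso C rC (P \<times> C') (prod_order rP (Restr rC C')))"

lemma poset_dvdI: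
  assumes "order_iso C rC (P \<times> C') (prod_order rP rC')" "partial_order_on P rP" "P \<noteq> {}"
  shows "poset_dvd P rP C rC"
proof -
  obtain \<phi> where \<phi>: "bij_betw \<phi> (P \<times> C') C"
    "\<And>x y. x \<in> P \<times> C' \<Longrightarrow> y \<in> P \<times> C' \<Longrightarrow> (x, y) \<in> prod_order rP rC' \<longleftrightarrow> (\<phi> x, \<phi> y) \<in> rC"
    using order_iso_sym[OF assms(1)] by (auto elim: order_isoE)
  obtain p where p: "p \<in> P"
    using assms(3) by blast
  let ?C = "(\<lambda>c. \<phi> (p, c)) ` C'"
  have "?C \<subseteq> C"
    using bij_betwE[OF \<phi>(1)] p by auto
  have "order_iso C' rC' ?C rC"
  proof (rule order_isoI)
    show "bij_betw (\<lambda>c. \<phi> (p, c)) C' ?C"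
      using bij_betw_imp_inj_on[OF \<phi>(1)] p by (auto simp: bij_betw_def inj_on_def)
  next
    fix x y assume "x \<in> C'" "y \<in> C'"
    then show "(x, y) \<in> rC' \<longleftrightarrow> (\<phi> (p, x), \<phi> (p, y)) \<in> rC"
      using \<phi>(2)[of "(p, x)" "(p, y)"] p partial_order_on_reflD[OF assms(2) p] by simp
  qed
  then have "order_iso C rC (P \<times> ?C) (prod_order rP rC)"
    using order_iso_trans[OF assms(1) order_iso_prod[OF order_iso_refl]] by blast
  with \<open>?C \<subseteq> C\<close> show ?thesis
    unfolding poset_dvd_def
    using order_iso_prod_Restr_iff[of C rC P ?C rP rC] partial_order_onD(4)[OF assms(2)]
    by (auto simp: Int_absorb2)
qed

lemma poset_dvd_via_factor:
  assumes "order_iso C rC (W \<times> Y) (prod_order rW rY)" "order_iso W rW (P' \<times> U) (prod_order rP' rU)"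
    and "order_iso P rP P' rP'" "partial_order_on P rP" "P \<noteq> {}"
  shows "poset_dvd P rP C rC"
proof (rule poset_dvdI[OF _ assms(4,5)])
  show "order_iso C rC (P \<times> (U \<times> Y)) (prod_order rP (prod_order rU rY))"
    using order_iso_trans[OF assms(1) order_iso_trans[OF order_iso_prod[OF assms(2) order_iso_refl]
        order_iso_trans[OF order_iso_prod_assoc order_iso_prod[OF order_iso_sym[OF assms(3)] order_iso_refl]]]] .
qed

text \<open>HOL cannot quantify over types, so the factors range over \<open>nat set\<close>; by
  \<open>order_iso_nat\<close> this loses nothing for finite posets.\<close>

definition indecomposable :: "'a set \<Rightarrow> 'a rel \<Rightarrow> bool" where
  "indecomposable P rP \<longleftrightarrow> card P \<ge> 2 \<and>
    (\<forall>(Q :: nat set) rQ (R :: nat set) rR. partial_order_on Q rQ \<longrightarrow> partial_order_on R rR \<longrightarrow>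
      finite Q \<longrightarrow> finite R \<longrightarrow> order_iso P rP (Q \<times> R) (prod_order rQ rR) \<longrightarrow> card Q = 1 \<or> card R = 1)"

lemma indecomposableD:
  assumes "indecomposable P rP" "partial_order_on Q rQ" "partial_order_on R rR" "finite Q" "finite R"
    and "order_iso P rP (Q \<times> R) (prod_order rQ rR)"
  shows "card Q = 1 \<or> card R = 1"
proof -
  obtain Q' :: "nat set" and rQ' where Q': "partial_order_on Q' rQ'" "finite Q'" "order_iso Q rQ Q' rQ'"
    using order_iso_nat[OF assms(2,4)] .
  obtain R' :: "nat set" and rR' where R': "partial_order_on R' rR'" "finite R'" "order_iso R rR R' rR'"
    using order_iso_nat[OF assms(3,5)] .
  have "order_iso P rP (Q' \<times> R') (prod_order rQ' rR')"
    using order_iso_trans[OF assms(6) order_iso_prod[OF Q'(3) R'(3)]] .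
  then have "card Q' = 1 \<or> card R' = 1"
    using assms(1) Q' R' unfolding indecomposable_def by blast
  then show ?thesis
    using order_iso_card[OF Q'(3)] order_iso_card[OF R'(3)] by simp
qed

definition nontrivial_factor :: "'a set \<Rightarrow> 'a rel \<Rightarrow> nat set \<Rightarrow> nat rel \<Rightarrow> bool" where
  "nontrivial_factor A rA Q rQ \<longleftrightarrow> partial_order_on Q rQ \<and> finite Q \<and> card Q \<ge> 2 \<and>
    (\<exists>(R :: nat set) rR. partial_order_on R rR \<and> finite R \<and> order_iso A rA (Q \<times> R) (prod_order rQ rR))"

lemma indecomposable_if_minimal_factor:
  assumes "nontrivial_factor A rA P rP" "\<And>Q rQ. nontrivial_factor A rA Q rQ \<Longrightarrow> card P \<le> card Q"
  shows "indecomposable P rP"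
  unfolding indecomposable_def
proof (intro conjI allI impI)
  obtain R :: "nat set" and rR where P: "partial_order_on P rP" "finite P" "card P \<ge> 2"
    "partial_order_on R rR" "finite R" "order_iso A rA (P \<times> R) (prod_order rP rR)"
    using assms(1) unfolding nontrivial_factor_def by blast
  show "card P \<ge> 2"
    by (fact P(3))
  fix Q1 :: "nat set" and rQ1 and Q2 :: "nat set" and rQ2
  assume Q: "partial_order_on Q1 rQ1" "partial_order_on Q2 rQ2" "finite Q1" "finite Q2"
    "order_iso P rP (Q1 \<times> Q2) (prod_order rQ1 rQ2)"
  show "card Q1 = 1 \<or> card Q2 = 1"
  proof (rule ccontr)
    assume "\<not> (card Q1 = 1 \<or> card Q2 = 1)"
    moreover have "card P = card Q1 * card Q2"
      using order_iso_card[OF Q(5)] by (simp add: card_cartesian_product)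
    ultimately have "card Q1 \<notin> {0, 1}" "card Q2 \<notin> {0, 1}"
      using P(3) by (cases "card Q1 = 0"; cases "card Q2 = 0"; simp)+
    with \<open>card P = card Q1 * card Q2\<close> have "card Q1 \<ge> 2" "card Q1 < card P"
      using n_less_n_mult_m[of "card Q1" "card Q2"] by auto
    obtain R' :: "nat set" and rR' where R': "partial_order_on R' rR'" "finite R'"
      "order_iso (Q2 \<times> R) (prod_order rQ2 rR) R' rR'"
      using order_iso_nat[OF partial_order_on_prod_order[OF Q(2) P(4)]] Q(4) P(5) by blast
    have "order_iso A rA (Q1 \<times> R') (prod_order rQ1 rR')"
      using order_iso_trans[OF P(6) order_iso_trans[OF order_iso_prod[OF Q(5) order_iso_refl]
          order_iso_trans[OF order_iso_prod_assoc order_iso_prod[OF order_iso_refl R'(3)]]]] .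
    then have "nontrivial_factor A rA Q1 rQ1"
      unfolding nontrivial_factor_def using Q R' \<open>card Q1 \<ge> 2\<close> by blast
    with assms(2) \<open>card Q1 < card P\<close> show False
      by fastforce
  qed
qed

lemma exists_indecomposable_dvd:
  assumes "finite_connected_poset A rA" "card A \<ge> 2"
  obtains P :: "nat set" and rP
  where "indecomposable P rP" "finite_connected_poset P rP" "poset_dvd P rP A rA"
proof -
  have po_A: "partial_order_on A rA" "finite A"
    using assms(1) unfolding finite_connected_poset_def by auto
  obtain A' :: "nat set" and rA' where A': "partial_order_on A' rA'" "finite A'" "order_iso A rA A' rA'"
    using order_iso_nat[OF po_A] .
  have "order_iso A rA (A' \<times> {0}) (prod_order rA' {(0, 0)})"
    using order_iso_trans[OF A'(3) order_iso_sym[OF order_iso_prod_unit[OF _ partial_order_on_singleton]]]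
    by simp
  then have "nontrivial_factor A rA A' rA'"
    unfolding nontrivial_factor_def using A' assms(2) order_iso_card[OF A'(3)]
    by (intro conjI exI[of _ "{0}"] exI[of _ "{(0, 0)}"]) (simp_all add: partial_order_on_singleton)
  then have "\<exists>n Q rQ. nontrivial_factor A rA Q rQ \<and> card Q = n"
    by blast
  then have "\<exists>Q rQ. nontrivial_factor A rA Q rQ \<and> card Q = (LEAST n. \<exists>Q rQ. nontrivial_factor A rA Q rQ \<and> card Q = n)"
    by (rule LeastI_ex)
  then obtain P rP where P: "nontrivial_factor A rA P rP"
    and least: "card P = (LEAST n. \<exists>Q rQ. nontrivial_factor A rA Q rQ \<and> card Q = n)"
    by blast
  have minimal: "card P \<le> card Q" if "nontrivial_factor A rA Q rQ" for Q rQ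
  proof -
    from that have "\<exists>Q' rQ'. nontrivial_factor A rA Q' rQ' \<and> card Q' = card Q"
      by blast
    then show ?thesis
      unfolding least by (rule Least_le)
  qed
  from P obtain R :: "nat set" and rR where R: "partial_order_on P rP" "partial_order_on R rR" "card P \<ge> 2"
    "order_iso A rA (P \<times> R) (prod_order rP rR)"
    unfolding nontrivial_factor_def by blast
  show thesis
  proof (rule that)
    show "indecomposable P rP"
      by (rule indecomposable_if_minimal_factor[OF P minimal])
    show "finite_connected_poset P rP"
      using finite_connected_poset_factors[OF assms(1) R(4) R(1,2)] by blast
    show "poset_dvd P rP A rA"
      by (rule poset_dvdI[OF R(4) R(1)]) (use R(3) in auto)
  qed
qed

lemma poset_dvdE:
  assumes "poset_dvd P rP A rA" "finite_connected_poset A rA" "partial_order_on P rP" "card P \<ge> 2"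
  obtains A' where "finite_connected_poset A' (Restr rA A')"
    "order_iso A rA (P \<times> A') (prod_order rP (Restr rA A'))" "card A' < card A"
proof -
  obtain A' where A': "A' \<subseteq> A" "order_iso A rA (P \<times> A') (prod_order rP (Restr rA A'))"
    using assms(1) unfolding poset_dvd_def by blast
  have "partial_order_on A' (Restr rA A')"
    using partial_order_on_Restr[OF _ A'(1)] assms(2) unfolding finite_connected_poset_def by blast
  then have fcp: "finite_connected_poset A' (Restr rA A')"
    using finite_connected_poset_factors(2)[OF assms(2) A'(2) assms(3)] by blast
  have "card A = card P * card A'" "card A' > 0"
    using order_iso_card[OF A'(2)] fcp by (auto simp: card_cartesian_product finite_connected_poset_def)
  then have "card A' < card A"
    using n_less_m_mult_n[of "card A'" "card P"] assms(4) by simp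
  with fcp A'(2) show thesis
    by (rule that)
qed

text \<open>Refining A \<times> B \<cong> C \<times> D and then P \<times> A' \<cong> W \<times> X splits P between C and D;
  being indecomposable, it lies entirely on one side.\<close>

lemma indecomposable_dvd_prod:
  fixes C :: "'c set" and D :: "'d set"
  assumes P: "indecomposable P rP" "finite_connected_poset P rP" "poset_dvd P rP A rA"
    and fcp: "finite_connected_poset A rA" "finite_connected_poset B rB"
      "finite_connected_poset C rC" "finite_connected_poset D rD"
    and iso: "order_iso (A \<times> B) (prod_order rA rB) (C \<times> D) (prod_order rC rD)"
  shows "poset_dvd P rP C rC \<or> poset_dvd P rP D rD"
proof -
  have po: "partial_order_on C rC" "partial_order_on D rD" "partial_order_on P rP"
    and ne: "P \<noteq> {}" and card: "card P \<ge> 2"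
    using fcp P unfolding finite_connected_poset_def indecomposable_def by auto
  obtain W :: "'c set" and rW and X :: "'d set" and rX and Y :: "'c set" and rY and Z :: "'d set" and rZ
    where fcp_WX: "finite_connected_poset W rW" "finite_connected_poset X rX"
    and "finite_connected_poset Y rY" "finite_connected_poset Z rZ"
    and iso_A: "order_iso A rA (W \<times> X) (prod_order rW rX)"
    and "order_iso B rB (Y \<times> Z) (prod_order rY rZ)"
    and iso_C: "order_iso C rC (W \<times> Y) (prod_order rW rY)"
    and iso_D: "order_iso D rD (X \<times> Z) (prod_order rX rZ)"
    by (rule connected_refinement_finite[OF fcp(1,2) po(1,2) iso])
  obtain A' where A': "finite_connected_poset A' (Restr rA A')"
    "order_iso A rA (P \<times> A') (prod_order rP (Restr rA A'))"
    by (rule poset_dvdE[OF P(3) fcp(1) po(3) card])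
  obtain P1 :: "'c set" and rP1 and P2 :: "'d set" and rP2 and U :: "'c set" and rU and V :: "'d set" and rV
    where "finite_connected_poset P1 rP1" "finite_connected_poset P2 rP2"
    and "finite_connected_poset U rU" "finite_connected_poset V rV"
    and iso_P: "order_iso P rP (P1 \<times> P2) (prod_order rP1 rP2)"
    and "order_iso A' (Restr rA A') (U \<times> V) (prod_order rU rV)"
    and iso_W: "order_iso W rW (P1 \<times> U) (prod_order rP1 rU)"
    and iso_X: "order_iso X rX (P2 \<times> V) (prod_order rP2 rV)"
    using connected_refinement_finite[OF P(2) A'(1) _ _ order_iso_trans[OF order_iso_sym[OF A'(2)] iso_A]]
      fcp_WX unfolding finite_connected_poset_def by metis
  then have "partial_order_on P1 rP1" "partial_order_on P2 rP2" "finite P1" "finite P2"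
    unfolding finite_connected_poset_def by auto
  then consider "order_iso P rP P1 rP1" | "order_iso P rP P2 rP2"
    using indecomposableD[OF P(1) _ _ _ _ iso_P]
      order_iso_trans[OF iso_P order_iso_prod_unit] order_iso_trans[OF iso_P order_iso_unit_prod] by metis
  then show ?thesis
    by cases (use poset_dvd_via_factor[OF iso_C iso_W _ po(3) ne] poset_dvd_via_factor[OF iso_D iso_X _ po(3) ne]
      in blast)+
qed

section \<open>Families of isomorphisms between connected posets\<close>

lemma order_iso_absorb_left:
  assumes "order_iso A rA (P \<times> A') (prod_order rP rA')" "order_iso A' rA' (W' \<times> X) (prod_order rW' rX)"
    and "order_iso (P \<times> W') (prod_order rP rW') W rW"
  shows "order_iso A rA (W \<times> X) (prod_order rW rX)"
  using order_iso_trans[OF assms(1) order_iso_trans[OF order_iso_prod[OF order_iso_refl assms(2)]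
      order_iso_trans[OF order_iso_sym[OF order_iso_prod_assoc] order_iso_prod[OF assms(3) order_iso_refl]]]] .

lemma order_iso_absorb_right:
  assumes "order_iso A rA (P \<times> A') (prod_order rP rA')" "order_iso A' rA' (W \<times> X') (prod_order rW rX')"
    and "order_iso (P \<times> X') (prod_order rP rX') X rX"
  shows "order_iso A rA (W \<times> X) (prod_order rW rX)"
  using order_iso_trans[OF assms(1) order_iso_trans[OF order_iso_prod[OF order_iso_refl assms(2)]
      order_iso_trans[OF order_iso_prod_left_commute order_iso_prod[OF order_iso_refl assms(3)]]]] .

lemma order_iso_cancel_factor:
  assumes "finite_connected_poset P rP" "finite_connected_poset A' rA'" "finite_connected_poset B rB"
    and "finite_connected_poset C' rC'" "finite_connected_poset D rD"
    and "order_iso A rA (P \<times> A') (prod_order rP rA')" "order_iso C rC (P \<times> C') (prod_order rP rC')"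
    and "order_iso (A \<times> B) (prod_order rA rB) (C \<times> D) (prod_order rC rD)"
  shows "order_iso (A' \<times> B) (prod_order rA' rB) (C' \<times> D) (prod_order rC' rD)"
proof (rule order_iso_cancel[OF assms(1)])
  show "finite_connected_poset (A' \<times> B) (prod_order rA' rB)"
    by (rule finite_connected_poset_prod[OF assms(2,3)])
  show "finite_connected_poset (C' \<times> D) (prod_order rC' rD)"
    by (rule finite_connected_poset_prod[OF assms(4,5)])
  have "order_iso (P \<times> (A' \<times> B)) (prod_order rP (prod_order rA' rB)) (A \<times> B) (prod_order rA rB)"
    using order_iso_trans[OF order_iso_sym[OF order_iso_prod_assoc]
        order_iso_prod[OF order_iso_sym[OF assms(6)] order_iso_refl]] .
  moreover have "order_iso (C \<times> D) (prod_order rC rD) (P \<times> (C' \<times> D)) (prod_order rP (prod_order rC' rD))"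
    using order_iso_trans[OF order_iso_prod[OF assms(7) order_iso_refl] order_iso_prod_assoc] .
  ultimately show "order_iso (P \<times> (A' \<times> B)) (prod_order rP (prod_order rA' rB))
      (P \<times> (C' \<times> D)) (prod_order rP (prod_order rC' rD))"
    by (rule order_iso_trans[OF _ order_iso_trans[OF assms(8)]])
qed

lemma family_cancel_factor:
  assumes "finite_connected_poset P rP" "finite_connected_poset A' rA'"
    and "order_iso A rA (P \<times> A') (prod_order rP rA')"
    and "\<forall>j\<in>J. poset_dvd P rP (C j) (rC j)" "\<And>j. j \<in> J \<Longrightarrow> finite_connected_poset (C j) (rC j)"
    and "\<And>k. k \<in> K \<Longrightarrow> finite_connected_poset (D k) (rD k)"
    and "\<And>j k. j \<in> J \<Longrightarrow> k \<in> K \<Longrightarrow> finite_connected_poset (B j k) (rB j k)"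
    and "\<And>j k. j \<in> J \<Longrightarrow> k \<in> K \<Longrightarrow>
      order_iso (A \<times> B j k) (prod_order rA (rB j k)) (C j \<times> D k) (prod_order (rC j) (rD k))"
  obtains C' where "\<forall>j\<in>J. finite_connected_poset (C' j) (Restr (rC j) (C' j)) \<and>
      order_iso (C j) (rC j) (P \<times> C' j) (prod_order rP (Restr (rC j) (C' j)))"
    and "\<forall>j\<in>J. \<forall>k\<in>K. order_iso (A' \<times> B j k) (prod_order rA' (rB j k))
      (C' j \<times> D k) (prod_order (Restr (rC j) (C' j)) (rD k))"
proof -
  have po_P: "partial_order_on P rP"
    using assms(1) unfolding finite_connected_poset_def by auto
  from assms(4) have "\<forall>j\<in>J. \<exists>C'. C' \<subseteq> C j \<and> order_iso (C j) (rC j) (P \<times> C') (prod_order rP (Restr (rC j) C'))"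
    by (simp add: poset_dvd_def)
  then obtain C' where C': "\<forall>j\<in>J. C' j \<subseteq> C j \<and>
      order_iso (C j) (rC j) (P \<times> C' j) (prod_order rP (Restr (rC j) (C' j)))"
    by (rule bchoice[elim_format]) blast
  have fcp_C': "finite_connected_poset (C' j) (Restr (rC j) (C' j))" if "j \<in> J" for j
  proof (rule finite_connected_poset_factors(2)[OF assms(5)[OF that] _ po_P])
    show "order_iso (C j) (rC j) (P \<times> C' j) (prod_order rP (Restr (rC j) (C' j)))"
      using C' that by blast
    show "partial_order_on (C' j) (Restr (rC j) (C' j))"
      using partial_order_on_Restr C' assms(5)[OF that] that unfolding finite_connected_poset_def by blast
  qed
  have "order_iso (A' \<times> B j k) (prod_order rA' (rB j k)) (C' j \<times> D k) (prod_order (Restr (rC j) (C' j)) (rD k))"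
    if "j \<in> J" "k \<in> K" for j k
    using order_iso_cancel_factor[OF assms(1,2) assms(7)[OF that] fcp_C'[OF that(1)] assms(6)[OF that(2)]
        assms(3) _ assms(8)[OF that]] C' that by blast
  with C' fcp_C' show thesis
    using that by blast
qed

text \<open>The conclusion of the theorem for a family of isomorphisms A \<times> B j k \<cong> C j \<times> D k.
  W and X live in \<open>nat set\<close> because the induction below builds them as products.\<close>

definition common_refinement ::
  "'a set \<Rightarrow> 'a rel \<Rightarrow> 'j set \<Rightarrow> ('j \<Rightarrow> 'c set) \<Rightarrow> ('j \<Rightarrow> 'c rel) \<Rightarrow> 'k set \<Rightarrow> ('k \<Rightarrow> 'd set) \<Rightarrow>
    ('k \<Rightarrow> 'd rel) \<Rightarrow> ('j \<Rightarrow> 'k \<Rightarrow> 'b set) \<Rightarrow> ('j \<Rightarrow> 'k \<Rightarrow> 'b rel) \<Rightarrow> bool" where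
  "common_refinement A rA J C rC K D rD B rB \<longleftrightarrow>
    (\<exists>(W :: nat set) rW (X :: nat set) rX (Y :: 'j \<Rightarrow> 'c set) rY (Z :: 'k \<Rightarrow> 'd set) rZ.
      partial_order_on W rW \<and> finite W \<and> partial_order_on X rX \<and> finite X \<and>
      (\<forall>j\<in>J. partial_order_on (Y j) (rY j) \<and> finite (Y j)) \<and>
      (\<forall>k\<in>K. partial_order_on (Z k) (rZ k) \<and> finite (Z k)) \<and>
      order_iso A rA (W \<times> X) (prod_order rW rX) \<and>
      (\<forall>j\<in>J. order_iso (C j) (rC j) (W \<times> Y j) (prod_order rW (rY j))) \<and>
      (\<forall>k\<in>K. order_iso (D k) (rD k) (X \<times> Z k) (prod_order rX (rZ k))) \<and>
      (\<forall>j\<in>J. \<forall>k\<in>K. order_iso (B j k) (rB j k) (Y j \<times> Z k) (prod_order (rY j) (rZ k))))"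

lemma common_refinement_card_1:
  assumes "card A = 1" "partial_order_on A rA"
    and "\<And>j. j \<in> J \<Longrightarrow> finite_connected_poset (C j) (rC j)"
    and "\<And>k. k \<in> K \<Longrightarrow> finite_connected_poset (D k) (rD k)"
    and "\<And>j k. j \<in> J \<Longrightarrow> k \<in> K \<Longrightarrow>
      order_iso (A \<times> B j k) (prod_order rA (rB j k)) (C j \<times> D k) (prod_order (rC j) (rD k))"
  shows "common_refinement A rA J C rC K D rD B rB"
proof -
  let ?U = "{0 :: nat}" and ?u = "{(0 :: nat, 0 :: nat)}"
  have unit: "card ?U = 1" "partial_order_on ?U ?u"
    by (simp_all add: partial_order_on_singleton)
  have "order_iso A rA (?U \<times> ?U) (prod_order ?u ?u)"
    using order_iso_card_1[OF assms(1,2) _ partial_order_on_prod_order[OF unit(2) unit(2)]] by simp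
  moreover have "order_iso (C j) (rC j) (?U \<times> C j) (prod_order ?u (rC j))"
    "order_iso (D k) (rD k) (?U \<times> D k) (prod_order ?u (rD k))" for j k
    using order_iso_sym[OF order_iso_unit_prod[OF unit]] by blast+
  moreover have "order_iso (B j k) (rB j k) (C j \<times> D k) (prod_order (rC j) (rD k))"
    if "j \<in> J" "k \<in> K" for j k
    using order_iso_trans[OF order_iso_sym[OF order_iso_unit_prod[OF assms(1,2)]] assms(5)[OF that]] .
  ultimately show ?thesis
    unfolding common_refinement_def using unit(2) assms(3,4)
    by (intro exI[of _ ?U] exI[of _ ?u] exI[of _ C] exI[of _ rC] exI[of _ D] exI[of _ rD])
      (simp add: finite_connected_poset_def)
qed

lemma common_refinement_lift_left:
  fixes C C' :: "'j \<Rightarrow> 'c set" and D :: "'k \<Rightarrow> 'd set"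
  assumes "common_refinement A' rA' J C' rC' K D rD B rB" "partial_order_on P rP" "finite P"
    and "order_iso A rA (P \<times> A') (prod_order rP rA')"
    and "\<And>j. j \<in> J \<Longrightarrow> order_iso (C j) (rC j) (P \<times> C' j) (prod_order rP (rC' j))"
  shows "common_refinement A rA J C rC K D rD B rB"
proof -
  obtain W' :: "nat set" and rW' and X :: "nat set" and rX and Y :: "'j \<Rightarrow> 'c set" and rY
    and Z :: "'k \<Rightarrow> 'd set" and rZ where W': "partial_order_on W' rW'" "finite W'"
    and refinement: "partial_order_on X rX \<and> finite X"
      "\<forall>j\<in>J. partial_order_on (Y j) (rY j) \<and> finite (Y j)"
      "\<forall>k\<in>K. partial_order_on (Z k) (rZ k) \<and> finite (Z k)"
      "\<forall>k\<in>K. order_iso (D k) (rD k) (X \<times> Z k) (prod_order rX (rZ k))"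
      "\<forall>j\<in>J. \<forall>k\<in>K. order_iso (B j k) (rB j k) (Y j \<times> Z k) (prod_order (rY j) (rZ k))"
    and A': "order_iso A' rA' (W' \<times> X) (prod_order rW' rX)"
    and C': "\<forall>j\<in>J. order_iso (C' j) (rC' j) (W' \<times> Y j) (prod_order rW' (rY j))"
    using assms(1) unfolding common_refinement_def by blast
  obtain W :: "nat set" and rW where W: "partial_order_on W rW" "finite W"
    "order_iso (P \<times> W') (prod_order rP rW') W rW"
    using order_iso_nat[OF partial_order_on_prod_order[OF assms(2) W'(1)]] assms(3) W'(2) by blast
  have "order_iso A rA (W \<times> X) (prod_order rW rX)"
    using order_iso_absorb_left[OF assms(4) A' W(3)] .
  moreover have "\<forall>j\<in>J. order_iso (C j) (rC j) (W \<times> Y j) (prod_order rW (rY j))"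
    using order_iso_absorb_left[OF assms(5) _ W(3)] C' by blast
  ultimately show ?thesis
    unfolding common_refinement_def using W(1,2) refinement by blast
qed

lemma common_refinement_lift_right:
  fixes C :: "'j \<Rightarrow> 'c set" and D D' :: "'k \<Rightarrow> 'd set"
  assumes "common_refinement A' rA' J C rC K D' rD' B rB" "partial_order_on P rP" "finite P"
    and "order_iso A rA (P \<times> A') (prod_order rP rA')"
    and "\<And>k. k \<in> K \<Longrightarrow> order_iso (D k) (rD k) (P \<times> D' k) (prod_order rP (rD' k))"
  shows "common_refinement A rA J C rC K D rD B rB"
proof -
  obtain X' :: "nat set" and rX' and W :: "nat set" and rW and Y :: "'j \<Rightarrow> 'c set" and rY
    and Z :: "'k \<Rightarrow> 'd set" and rZ where X': "partial_order_on X' rX'" "finite X'"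
    and refinement: "partial_order_on W rW \<and> finite W"
      "\<forall>j\<in>J. partial_order_on (Y j) (rY j) \<and> finite (Y j)"
      "\<forall>k\<in>K. partial_order_on (Z k) (rZ k) \<and> finite (Z k)"
      "\<forall>j\<in>J. order_iso (C j) (rC j) (W \<times> Y j) (prod_order rW (rY j))"
      "\<forall>j\<in>J. \<forall>k\<in>K. order_iso (B j k) (rB j k) (Y j \<times> Z k) (prod_order (rY j) (rZ k))"
    and A': "order_iso A' rA' (W \<times> X') (prod_order rW rX')"
    and D': "\<forall>k\<in>K. order_iso (D' k) (rD' k) (X' \<times> Z k) (prod_order rX' (rZ k))"
    using assms(1) unfolding common_refinement_def by blast
  obtain X :: "nat set" and rX where X: "partial_order_on X rX" "finite X"
    "order_iso (P \<times> X') (prod_order rP rX') X rX"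
    using order_iso_nat[OF partial_order_on_prod_order[OF assms(2) X'(1)]] assms(3) X'(2) by blast
  have "order_iso A rA (W \<times> X) (prod_order rW rX)"
    using order_iso_absorb_right[OF assms(4) A' X(3)] .
  moreover have "\<forall>k\<in>K. order_iso (D k) (rD k) (X \<times> Z k) (prod_order rX (rZ k))"
    using order_iso_absorb_left[OF assms(5) _ X(3)] D' by blast
  ultimately show ?thesis
    unfolding common_refinement_def using X(1,2) refinement by blast
qed

theorem common_refinement_exists:
  assumes "finite_connected_poset A rA"
    and "\<And>j. j \<in> J \<Longrightarrow> finite_connected_poset (C j) (rC j)"
    and "\<And>k. k \<in> K \<Longrightarrow> finite_connected_poset (D k) (rD k)"
    and "\<And>j k. j \<in> J \<Longrightarrow> k \<in> K \<Longrightarrow> finite_connected_poset (B j k) (rB j k)"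
    and "\<And>j k. j \<in> J \<Longrightarrow> k \<in> K \<Longrightarrow>
      order_iso (A \<times> B j k) (prod_order rA (rB j k)) (C j \<times> D k) (prod_order (rC j) (rD k))"
  shows "common_refinement A rA J C rC K D rD B rB"
  using assms
proof (induction "card A" arbitrary: A rA C rC D rD rule: less_induct)
  case less
  note fcp_A = less.prems(1) and fcp = less.prems(2-4) and iso = less.prems(5)
  have po_A: "partial_order_on A rA" and "card A \<noteq> 0"
    using fcp_A by (simp_all add: finite_connected_poset_def)
  show ?case
  proof (cases "card A = 1")
    case True
    then show ?thesis
      by (rule common_refinement_card_1[OF _ po_A fcp(1,2) iso])
  next
    case False
    with \<open>card A \<noteq> 0\<close> have "card A \<ge> 2"
      by linarith
    then obtain P :: "nat set" and rP where P: "indecomposable P rP"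
      "finite_connected_poset P rP" "poset_dvd P rP A rA"
      by (rule exists_indecomposable_dvd[OF fcp_A])
    then have po_P: "partial_order_on P rP" "finite P" "card P \<ge> 2"
      unfolding finite_connected_poset_def indecomposable_def by auto
    obtain A' where A': "finite_connected_poset A' (Restr rA A')"
      "order_iso A rA (P \<times> A') (prod_order rP (Restr rA A'))" "card A' < card A"
      by (rule poset_dvdE[OF P(3) fcp_A po_P(1,3)])
    have "(\<forall>j\<in>J. poset_dvd P rP (C j) (rC j)) \<or> (\<forall>k\<in>K. poset_dvd P rP (D k) (rD k))"
      using indecomposable_dvd_prod[OF P fcp_A fcp(3) fcp(1,2) iso] by blast
    then show ?thesis
    proof
      assume "\<forall>j\<in>J. poset_dvd P rP (C j) (rC j)"
      then obtain C' where C': "\<forall>j\<in>J. finite_connected_poset (C' j) (Restr (rC j) (C' j)) \<and>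
          order_iso (C j) (rC j) (P \<times> C' j) (prod_order rP (Restr (rC j) (C' j)))"
        and iso': "\<forall>j\<in>J. \<forall>k\<in>K. order_iso (A' \<times> B j k) (prod_order (Restr rA A') (rB j k))
          (C' j \<times> D k) (prod_order (Restr (rC j) (C' j)) (rD k))"
        by (rule family_cancel_factor[OF P(2) A'(1,2) _ fcp iso])
      have "common_refinement A' (Restr rA A') J C' (\<lambda>j. Restr (rC j) (C' j)) K D rD B rB"
        using less.hyps[of A' "Restr rA A'" C' "\<lambda>j. Restr (rC j) (C' j)" D rD] A'(1,3) C' fcp(2,3) iso'
        by blast
      then show ?thesis
        by (rule common_refinement_lift_left[OF _ po_P(1,2) A'(2)]) (use C' in blast)
    next
      assume "\<forall>k\<in>K. poset_dvd P rP (D k) (rD k)"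
      then obtain D' where D': "\<forall>k\<in>K. finite_connected_poset (D' k) (Restr (rD k) (D' k)) \<and>
          order_iso (D k) (rD k) (P \<times> D' k) (prod_order rP (Restr (rD k) (D' k)))"
        and iso': "\<forall>k\<in>K. \<forall>j\<in>J. order_iso (A' \<times> B j k) (prod_order (Restr rA A') (rB j k))
          (D' k \<times> C j) (prod_order (Restr (rD k) (D' k)) (rC j))"
        by (rule family_cancel_factor[OF P(2) A'(1,2) _ fcp(2,1) fcp(3) order_iso_trans[OF iso order_iso_prod_swap]])
      have "common_refinement A' (Restr rA A') J C rC K D' (\<lambda>k. Restr (rD k) (D' k)) B rB"
        using less.hyps[of A' "Restr rA A'" C rC D' "\<lambda>k. Restr (rD k) (D' k)"] A'(1,3) D' fcp(1,3)
          iso' order_iso_trans[OF _ order_iso_prod_swap] by blast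
      then show ?thesis
        by (rule common_refinement_lift_right[OF _ po_P(1,2) A'(2)]) (use D' in blast)
    qed
  qed
qed

section \<open>Disjoint unions\<close>

lemma order_iso_UN:
  assumes "disjoint_family_on M L" "disjoint_family_on N L"
    and "r \<subseteq> (\<Union>l\<in>L. M l \<times> M l)" "s \<subseteq> (\<Union>l\<in>L. N l \<times> N l)"
    and "\<And>l. l \<in> L \<Longrightarrow> order_iso (M l) r (N l) s"
  shows "order_iso (\<Union>l\<in>L. M l) r (\<Union>l\<in>L. N l) s"
proof -
  obtain \<phi> where \<phi>: "\<And>l. l \<in> L \<Longrightarrow> bij_betw (\<phi> l) (M l) (N l)"
    "\<And>l x y. l \<in> L \<Longrightarrow> x \<in> M l \<Longrightarrow> y \<in> M l \<Longrightarrow> (x, y) \<in> r \<longleftrightarrow> (\<phi> l x, \<phi> l y) \<in> s"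
    using bchoice[of L "\<lambda>l \<phi>. bij_betw \<phi> (M l) (N l) \<and> (\<forall>x\<in>M l. \<forall>y\<in>M l. (x, y) \<in> r \<longleftrightarrow> (\<phi> x, \<phi> y) \<in> s)"]
      assms(5) unfolding order_iso_def by metis
  have unique: "l = l'" if "disjoint_family_on F L" "l \<in> L" "l' \<in> L" "x \<in> F l" "x \<in> F l'" for F l l' x
    using disjoint_family_onD[OF that(1-3)] that(4,5) by blast
  show ?thesis
  proof (rule order_iso_of_surjections[of snd "Sigma L M" _ "\<lambda>(l, x). \<phi> l x"])
    show "snd ` Sigma L M = (\<Union>l\<in>L. M l)"
      by (rule snd_image_Sigma)
    have "(\<lambda>(l, x). \<phi> l x) ` Sigma L M = (\<Union>l\<in>L. \<phi> l ` M l)"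
      by fastforce
    also have "\<dots> = (\<Union>l\<in>L. N l)"
      using \<phi>(1) by (simp add: bij_betw_def)
    finally show "(\<lambda>(l, x). \<phi> l x) ` Sigma L M = (\<Union>l\<in>L. N l)" .
  next
    fix p q assume "p \<in> Sigma L M" "q \<in> Sigma L M"
    then obtain l x l' y where pq: "p = (l, x)" "q = (l', y)" "l \<in> L" "l' \<in> L" "x \<in> M l" "y \<in> M l'"
      by auto
    then have images: "\<phi> l x \<in> N l" "\<phi> l' y \<in> N l'"
      using \<phi>(1) bij_betwE by blast+
    have same_block: "l = l'" if related: "x = y \<or> \<phi> l x = \<phi> l' y \<or> (x, y) \<in> r \<or> (\<phi> l x, \<phi> l' y) \<in> s"
    proof -
      consider "x = y" | "\<phi> l x = \<phi> l' y"
        | l'' where "l'' \<in> L" "x \<in> M l''" "y \<in> M l''"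
        | l'' where "l'' \<in> L" "\<phi> l x \<in> N l''" "\<phi> l' y \<in> N l''"
        using related assms(3,4) by blast
      then show ?thesis
        by cases (use pq images unique[OF assms(1)] unique[OF assms(2)] in metis)+
    qed
    show "snd p = snd q \<longleftrightarrow> (case p of (l, x) \<Rightarrow> \<phi> l x) = (case q of (l, x) \<Rightarrow> \<phi> l x)"
      using pq same_block inj_onD[OF bij_betw_imp_inj_on[OF \<phi>(1)]] by auto
    show "(snd p, snd q) \<in> r \<longleftrightarrow> ((case p of (l, x) \<Rightarrow> \<phi> l x), (case q of (l, x) \<Rightarrow> \<phi> l x)) \<in> s"
      using pq same_block \<phi>(2) by auto
  qed
qed

definition Sigma_order :: "'j set \<Rightarrow> ('j \<Rightarrow> 'y rel) \<Rightarrow> ('j \<times> 'y) rel" where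
  "Sigma_order J rY = {((j, y), (j', y')). j = j' \<and> j \<in> J \<and> (y, y') \<in> rY j}"

lemma Sigma_order_iff [simp]: "((j, y), (j', y')) \<in> Sigma_order J rY \<longleftrightarrow> j = j' \<and> j \<in> J \<and> (y, y') \<in> rY j"
  by (simp add: Sigma_order_def)

lemma partial_order_on_Sigma_order:
  assumes "\<And>j. j \<in> J \<Longrightarrow> partial_order_on (Y j) (rY j)"
  shows "partial_order_on (Sigma J Y) (Sigma_order J rY)"
  by (rule partial_order_onI)
    (use assms in \<open>auto simp: Sigma_order_def dest: partial_order_on_memD partial_order_on_transD
      partial_order_on_antisymD intro: partial_order_on_reflD\<close>)

lemma order_iso_Sigma_order:
  "j \<in> J \<Longrightarrow> order_iso (Y j) (rY j) ({j} \<times> Y j) (Sigma_order J rY)"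
  by (rule order_isoI[of "Pair j"]) (auto simp: bij_betw_def inj_on_def)

lemma order_iso_UN_prod_Sigma:
  assumes "disjoint_family_on M J" "r \<subseteq> (\<Union>j\<in>J. M j \<times> M j)"
    and "rW \<subseteq> W \<times> W" "\<And>j. j \<in> J \<Longrightarrow> rY j \<subseteq> Y j \<times> Y j"
    and "\<And>j. j \<in> J \<Longrightarrow> order_iso (M j) r (W \<times> Y j) (prod_order rW (rY j))"
  shows "order_iso (\<Union>j\<in>J. M j) r (W \<times> Sigma J Y) (prod_order rW (Sigma_order J rY))"
proof -
  have "W \<times> Sigma J Y = (\<Union>j\<in>J. W \<times> ({j} \<times> Y j))"
    by auto
  moreover have "order_iso (\<Union>j\<in>J. M j) r (\<Union>j\<in>J. W \<times> ({j} \<times> Y j)) (prod_order rW (Sigma_order J rY))"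
  proof (rule order_iso_UN[OF assms(1) _ assms(2)])
    show "disjoint_family_on (\<lambda>j. W \<times> ({j} \<times> Y j)) J"
      by (auto simp: disjoint_family_on_def)
    show "prod_order rW (Sigma_order J rY) \<subseteq> (\<Union>j\<in>J. (W \<times> ({j} \<times> Y j)) \<times> W \<times> ({j} \<times> Y j))"
      using assms(3,4) by (fastforce simp: prod_order_def Sigma_order_def)
    show "order_iso (M j) r (W \<times> ({j} \<times> Y j)) (prod_order rW (Sigma_order J rY))" if "j \<in> J" for j
      using order_iso_trans[OF assms(5)[OF that] order_iso_prod[OF order_iso_refl order_iso_Sigma_order[of j J Y rY]]]
        that by blast
  qed
  ultimately show ?thesis
    by simp
qed

lemma order_iso_UN_Sigma_prod_Sigma:
  assumes "disjoint_family_on (\<lambda>(j, k). M j k) (J \<times> K)" "r \<subseteq> (\<Union>(j, k)\<in>J \<times> K. M j k \<times> M j k)"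
    and "\<And>j. j \<in> J \<Longrightarrow> rY j \<subseteq> Y j \<times> Y j" "\<And>k. k \<in> K \<Longrightarrow> rZ k \<subseteq> Z k \<times> Z k"
    and "\<And>j k. j \<in> J \<Longrightarrow> k \<in> K \<Longrightarrow> order_iso (M j k) r (Y j \<times> Z k) (prod_order (rY j) (rZ k))"
  shows "order_iso (\<Union>(j, k)\<in>J \<times> K. M j k) r (Sigma J Y \<times> Sigma K Z)
    (prod_order (Sigma_order J rY) (Sigma_order K rZ))"
proof -
  let ?N = "\<lambda>(j, k). ({j} \<times> Y j) \<times> ({k} \<times> Z k)"
  have eq: "Sigma J Y \<times> Sigma K Z = (\<Union>l\<in>J \<times> K. ?N l)"
    by auto
  have "order_iso (\<Union>l\<in>J \<times> K. case l of (j, k) \<Rightarrow> M j k) r (\<Union>l\<in>J \<times> K. ?N l)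
      (prod_order (Sigma_order J rY) (Sigma_order K rZ))"
  proof (rule order_iso_UN[OF assms(1)])
    show "disjoint_family_on ?N (J \<times> K)"
      by (auto simp: disjoint_family_on_def)
    have "(\<lambda>l. (case l of (j, k) \<Rightarrow> M j k) \<times> (case l of (j, k) \<Rightarrow> M j k)) = (\<lambda>(j, k). M j k \<times> M j k)"
      by auto
    with assms(2) show "r \<subseteq> (\<Union>l\<in>J \<times> K. (case l of (j, k) \<Rightarrow> M j k) \<times> (case l of (j, k) \<Rightarrow> M j k))"
      by (simp only:)
    show "prod_order (Sigma_order J rY) (Sigma_order K rZ) \<subseteq> (\<Union>l\<in>J \<times> K. ?N l \<times> ?N l)"
      using assms(3,4) by (fastforce simp: prod_order_def Sigma_order_def)
    show "order_iso (case l of (j, k) \<Rightarrow> M j k) r (?N l) (prod_order (Sigma_order J rY) (Sigma_order K rZ))"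
      if l: "l \<in> J \<times> K" for l
    proof -
      obtain j k where "l = (j, k)" "j \<in> J" "k \<in> K"
        using l by blast
      then show ?thesis
        using order_iso_trans[OF assms(5) order_iso_prod[OF order_iso_Sigma_order[of j J Y rY]
              order_iso_Sigma_order[of k K Z rZ]]] by simp
    qed
  qed
  then show ?thesis
    by (simp only: eq)
qed

lemma Sigma_order_iso_nat:
  assumes "finite J" "\<forall>j\<in>J. partial_order_on (Y j) (rY j) \<and> finite (Y j)"
  obtains N :: "nat set" and n where "partial_order_on N n" "order_iso (Sigma J Y) (Sigma_order J rY) N n"
proof -
  have "partial_order_on (Sigma J Y) (Sigma_order J rY)"
    by (rule partial_order_on_Sigma_order) (use assms(2) in blast)
  moreover have "finite (Sigma J Y)"
    using assms by (simp add: finite_SigmaI)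
  ultimately show thesis
    by (rule order_iso_nat) (rule that)
qed

section \<open>Components\<close>

definition zigzag :: "'a set \<Rightarrow> 'a rel \<Rightarrow> 'a rel" where
  "zigzag S r = Restr ((r \<union> r\<inverse>)\<^sup>*) S"

lemma equiv_zigzag: "equiv S (zigzag S r)"
proof (rule equivI)
  show "zigzag S r \<subseteq> S \<times> S"
    unfolding zigzag_def by blast
  show "refl_on S (zigzag S r)"
    unfolding refl_on_def zigzag_def by blast
  show "sym (zigzag S r)"
    using sym_rtrancl[OF sym_Un_converse, of r] unfolding sym_def zigzag_def by blast
  show "trans (zigzag S r)"
    using trans_rtrancl[of "r \<union> r\<inverse>"] unfolding trans_def zigzag_def by blast
qed

lemma zigzag_class_closed:
  assumes "X \<in> S // zigzag S r" "x \<in> X" "y \<in> S" "(x, y) \<in> (r \<union> r\<inverse>)\<^sup>*"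
  shows "y \<in> X"
proof -
  obtain a where a: "a \<in> S" "X = zigzag S r `` {a}"
    using assms(1) by (rule quotientE)
  then have "(a, x) \<in> (r \<union> r\<inverse>)\<^sup>*"
    using assms(2) unfolding zigzag_def by blast
  then have "(a, y) \<in> (r \<union> r\<inverse>)\<^sup>*"
    using assms(4) by (rule rtrancl_trans)
  with a assms(3) show ?thesis
    unfolding zigzag_def by blast
qed

lemma zigzag_classes:
  assumes "partial_order_on S r"
  shows "\<Union>(S // zigzag S r) = S" "disjoint_family_on (\<lambda>X. X) (S // zigzag S r)"
    and "r \<subseteq> (\<Union>X\<in>S // zigzag S r. X \<times> X)"
proof -
  show "\<Union>(S // zigzag S r) = S"
    by (rule Union_quotient[OF equiv_zigzag])
  show "disjoint_family_on (\<lambda>X. X) (S // zigzag S r)"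
    using quotient_disj[OF equiv_zigzag] unfolding disjoint_family_on_def by blast
  show "r \<subseteq> (\<Union>X\<in>S // zigzag S r. X \<times> X)"
  proof (rule subrelI)
    fix x y assume "(x, y) \<in> r"
    then have "x \<in> S" "y \<in> S" "(x, y) \<in> (r \<union> r\<inverse>)\<^sup>*"
      using partial_order_on_memD[OF assms] by auto
    then have "x \<in> zigzag S r `` {x}" "y \<in> zigzag S r `` {x}"
      unfolding zigzag_def by auto
    moreover have "zigzag S r `` {x} \<in> S // zigzag S r"
      using quotientI[OF \<open>x \<in> S\<close>] .
    ultimately show "(x, y) \<in> (\<Union>X\<in>S // zigzag S r. X \<times> X)"
      by blast
  qed
qed

lemma finite_connected_poset_zigzag_class:
  assumes "partial_order_on S r" "finite S" "X \<in> S // zigzag S r"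
  shows "finite_connected_poset X (Restr r X)"
proof -
  have sub: "X \<subseteq> S"
    using in_quotient_imp_subset[OF equiv_zigzag assms(3)] .
  have "(x, y) \<in> (Restr r X \<union> (Restr r X)\<inverse>)\<^sup>*" if "x \<in> X" "y \<in> X" for x y
  proof -
    have "(x, y) \<in> zigzag S r"
      using in_quotient_imp_in_rel[OF equiv_zigzag assms(3)] that by blast
    then have "(x, y) \<in> (r \<union> r\<inverse>)\<^sup>*"
      unfolding zigzag_def by blast
    then have "y \<in> X \<and> (x, y) \<in> (Restr r X \<union> (Restr r X)\<inverse>)\<^sup>*"
    proof (induction rule: rtrancl_induct)
      case (step z w)
      have "w \<in> S"
        using step(2) partial_order_on_memD[OF assms(1)] by blast
      moreover have "(x, w) \<in> (r \<union> r\<inverse>)\<^sup>*"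
        using step(1,2) by (rule rtrancl_into_rtrancl)
      ultimately have "w \<in> X"
        by (rule zigzag_class_closed[OF assms(3) \<open>x \<in> X\<close>])
      with step have "(z, w) \<in> Restr r X \<union> (Restr r X)\<inverse>"
        by blast
      with step.IH have "(x, w) \<in> (Restr r X \<union> (Restr r X)\<inverse>)\<^sup>*"
        by (meson rtrancl_into_rtrancl)
      with \<open>w \<in> X\<close> show ?case ..
    qed (use that in simp)
    then show ?thesis ..
  qed
  then have "connected_poset X (Restr r X)"
    unfolding connected_poset_def by blast
  moreover have "partial_order_on X (Restr r X)"
    using partial_order_on_Restr[OF assms(1) sub] .
  moreover have "finite X" "X \<noteq> {}"
    using finite_subset[OF sub assms(2)] in_quotient_imp_non_empty[OF equiv_zigzag assms(3)] .
  ultimately show ?thesis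
    unfolding finite_connected_poset_def by blast
qed

locale connected_factor_iso =
  fixes A :: "'a set" and rA and B :: "'b set" and rB and C :: "'c set" and rC and D :: "'d set" and rD
    and f :: "'a \<times> 'b \<Rightarrow> 'c \<times> 'd"
  assumes po_A: "partial_order_on A rA" and po_B: "partial_order_on B rB"
    and po_C: "partial_order_on C rC" and po_D: "partial_order_on D rD"
    and conn_A: "connected_poset A rA" and A_ne: "A \<noteq> {}"
    and bij: "bij_betw f (A \<times> B) (C \<times> D)"
    and order_iff: "\<And>x y. x \<in> A \<times> B \<Longrightarrow> y \<in> A \<times> B \<Longrightarrow>
      (x, y) \<in> prod_order rA rB \<longleftrightarrow> (f x, f y) \<in> prod_order rC rD"
begin

text \<open>As A is connected, block j k is a component of B, and f maps A \<times> block j k onto j \<times> k.\<close>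

definition block :: "'c set \<Rightarrow> 'd set \<Rightarrow> 'b set" where
  "block j k = {b \<in> B. \<exists>a\<in>A. f (a, b) \<in> j \<times> k}"

lemma block_subset: "block j k \<subseteq> B"
  unfolding block_def by blast

lemma f_mem: "a \<in> A \<Longrightarrow> b \<in> B \<Longrightarrow> f (a, b) \<in> C \<times> D"
  using bij_betw_apply[OF bij] by blast

lemma f_zigzag:
  assumes "a \<in> A" "a' \<in> A" "b \<in> B"
  shows "(fst (f (a, b)), fst (f (a', b))) \<in> (rC \<union> rC\<inverse>)\<^sup>*"
    and "(snd (f (a, b)), snd (f (a', b))) \<in> (rD \<union> rD\<inverse>)\<^sup>*"
proof -
  have "((a, b), (a', b)) \<in> (prod_order rA rB \<union> (prod_order rA rB)\<inverse>)\<^sup>*"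
    using rtrancl_Un_converse_map[of a a' rA "\<lambda>u. (u, b)" "prod_order rA rB"] conn_A assms
      partial_order_on_reflD[OF po_B] unfolding connected_poset_def by simp
  moreover have "(f u, f v) \<in> prod_order rC rD" if "(u, v) \<in> prod_order rA rB" for u v
    using that order_iff partial_order_onD(4)[OF partial_order_on_prod_order[OF po_A po_B]] by blast
  ultimately have "(f (a, b), f (a', b)) \<in> (prod_order rC rD \<union> (prod_order rC rD)\<inverse>)\<^sup>*"
    by (rule rtrancl_Un_converse_map)
  then show "(fst (f (a, b)), fst (f (a', b))) \<in> (rC \<union> rC\<inverse>)\<^sup>*"
    and "(snd (f (a, b)), snd (f (a', b))) \<in> (rD \<union> rD\<inverse>)\<^sup>*"
    by (rule rtrancl_prod_order_fst, rule rtrancl_prod_order_snd)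
qed

lemma f_block_mem:
  assumes "j \<in> C // zigzag C rC" "k \<in> D // zigzag D rD" "b \<in> block j k" "a \<in> A"
  shows "f (a, b) \<in> j \<times> k"
proof -
  obtain a0 where a0: "a0 \<in> A" "b \<in> B" "f (a0, b) \<in> j \<times> k"
    using assms(3) unfolding block_def by auto
  have "fst (f (a, b)) \<in> j"
    using zigzag_class_closed[OF assms(1) _ _ f_zigzag(1)[OF a0(1) assms(4) a0(2)]] a0(3) f_mem[OF assms(4) a0(2)]
    by (simp add: mem_Times_iff)
  moreover have "snd (f (a, b)) \<in> k"
    using zigzag_class_closed[OF assms(2) _ _ f_zigzag(2)[OF a0(1) assms(4) a0(2)]] a0(3) f_mem[OF assms(4) a0(2)]
    by (simp add: mem_Times_iff)
  ultimately show ?thesis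
    by (simp add: mem_Times_iff)
qed

lemma f_image_block:
  assumes "j \<in> C // zigzag C rC" "k \<in> D // zigzag D rD"
  shows "f ` (A \<times> block j k) = j \<times> k"
proof
  show "f ` (A \<times> block j k) \<subseteq> j \<times> k"
    by (rule image_subsetI, clarify, rule f_block_mem[OF assms])
  show "j \<times> k \<subseteq> f ` (A \<times> block j k)"
  proof
    fix y assume y: "y \<in> j \<times> k"
    then have "y \<in> C \<times> D"
      using in_quotient_imp_subset[OF equiv_zigzag assms(1)] in_quotient_imp_subset[OF equiv_zigzag assms(2)]
      by blast
    then have "y \<in> f ` (A \<times> B)"
      using bij by (simp add: bij_betw_def)
    then obtain a b where "a \<in> A" "b \<in> B" "y = f (a, b)"
      by auto
    moreover from this y have "b \<in> block j k"
      unfolding block_def by (intro CollectI conjI bexI[of _ a]) simp_all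
    ultimately show "y \<in> f ` (A \<times> block j k)"
      by blast
  qed
qed

lemma order_iso_block:
  assumes "j \<in> C // zigzag C rC" "k \<in> D // zigzag D rD"
  shows "order_iso (A \<times> block j k) (prod_order rA (Restr rB (block j k)))
    (j \<times> k) (prod_order (Restr rC j) (Restr rD k))"
proof -
  have sub: "A \<times> block j k \<subseteq> A \<times> B"
    using block_subset by blast
  have "bij_betw f (A \<times> block j k) (j \<times> k)"
    unfolding bij_betw_def
    using inj_on_subset[OF bij_betw_imp_inj_on[OF bij] sub] f_image_block[OF assms] ..
  then have "order_iso (A \<times> block j k) (prod_order rA rB) (j \<times> k) (prod_order rC rD)"
  proof (rule order_isoI)
    fix x y assume "x \<in> A \<times> block j k" "y \<in> A \<times> block j k"
    with sub show "(x, y) \<in> prod_order rA rB \<longleftrightarrow> (f x, f y) \<in> prod_order rC rD"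
      by (intro order_iff) auto
  qed
  then show ?thesis
    by (rule order_iso_cong) (auto simp: prod_order_def)
qed

lemma finite_connected_poset_block:
  assumes "finite C" "finite D" "j \<in> C // zigzag C rC" "k \<in> D // zigzag D rD"
  shows "finite_connected_poset (block j k) (Restr rB (block j k))"
proof (rule finite_connected_poset_factors(2))
  show "finite_connected_poset (j \<times> k) (prod_order (Restr rC j) (Restr rD k))"
    by (rule finite_connected_poset_prod[OF finite_connected_poset_zigzag_class[OF po_C assms(1,3)]
          finite_connected_poset_zigzag_class[OF po_D assms(2,4)]])
  show "order_iso (j \<times> k) (prod_order (Restr rC j) (Restr rD k))
      (A \<times> block j k) (prod_order rA (Restr rB (block j k)))"
    using order_iso_sym[OF order_iso_block[OF assms(3,4)]] .
  show "partial_order_on (block j k) (Restr rB (block j k))"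
    using partial_order_on_Restr[OF po_B block_subset] .
qed (fact po_A)

lemma mem_own_block:
  assumes "a \<in> A" "b \<in> B"
  shows "zigzag C rC `` {fst (f (a, b))} \<in> C // zigzag C rC" "zigzag D rD `` {snd (f (a, b))} \<in> D // zigzag D rD"
    and "b \<in> block (zigzag C rC `` {fst (f (a, b))}) (zigzag D rD `` {snd (f (a, b))})"
proof -
  have c: "fst (f (a, b)) \<in> C" "snd (f (a, b)) \<in> D"
    using f_mem[OF assms] by (simp_all add: mem_Times_iff)
  show "zigzag C rC `` {fst (f (a, b))} \<in> C // zigzag C rC"
    using quotientI[OF c(1)] .
  show "zigzag D rD `` {snd (f (a, b))} \<in> D // zigzag D rD"
    using quotientI[OF c(2)] .
  show "b \<in> block (zigzag C rC `` {fst (f (a, b))}) (zigzag D rD `` {snd (f (a, b))})"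
    unfolding block_def
    by (intro CollectI conjI bexI[OF _ assms(1)] assms(2))
      (simp add: mem_Times_iff zigzag_def c)
qed

lemma UN_blocks: "(\<Union>(j, k)\<in>(C // zigzag C rC) \<times> (D // zigzag D rD). block j k) = B"
proof
  show "(\<Union>(j, k)\<in>(C // zigzag C rC) \<times> (D // zigzag D rD). block j k) \<subseteq> B"
    by (intro UN_least) (simp add: block_subset split: prod.splits)
  show "B \<subseteq> (\<Union>(j, k)\<in>(C // zigzag C rC) \<times> (D // zigzag D rD). block j k)"
  proof
    fix b assume "b \<in> B"
    obtain a where "a \<in> A"
      using A_ne by blast
    note own = mem_own_block[OF this \<open>b \<in> B\<close>]
    have "b \<in> (\<lambda>(j, k). block j k) (zigzag C rC `` {fst (f (a, b))}, zigzag D rD `` {snd (f (a, b))})"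
      using own(3) by simp
    then show "b \<in> (\<Union>(j, k)\<in>(C // zigzag C rC) \<times> (D // zigzag D rD). block j k)"
      by (rule UN_I[rotated]) (use own(1,2) in blast)
  qed
qed

lemma disjoint_blocks: "disjoint_family_on (\<lambda>(j, k). block j k) ((C // zigzag C rC) \<times> (D // zigzag D rD))"
  unfolding disjoint_family_on_def
proof (intro ballI impI)
  fix l l' assume "l \<in> (C // zigzag C rC) \<times> (D // zigzag D rD)" "l' \<in> (C // zigzag C rC) \<times> (D // zigzag D rD)"
    and "l \<noteq> l'"
  then obtain j k j' k' where l: "l = (j, k)" "l' = (j', k')"
    and jk: "j \<in> C // zigzag C rC" "k \<in> D // zigzag D rD" "j' \<in> C // zigzag C rC" "k' \<in> D // zigzag D rD"
    by blast
  show "(case l of (j, k) \<Rightarrow> block j k) \<inter> (case l' of (j, k) \<Rightarrow> block j k) = {}"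
  proof (rule equals0I)
    fix b assume "b \<in> (case l of (j, k) \<Rightarrow> block j k) \<inter> (case l' of (j, k) \<Rightarrow> block j k)"
    then have b: "b \<in> block j k" "b \<in> block j' k'"
      using l by auto
    obtain a where "a \<in> A"
      using A_ne by blast
    then have "f (a, b) \<in> j \<times> k" "f (a, b) \<in> j' \<times> k'"
      using f_block_mem[OF jk(1,2) b(1)] f_block_mem[OF jk(3,4) b(2)] by blast+
    then have "j \<inter> j' \<noteq> {}" "k \<inter> k' \<noteq> {}"
      by (auto simp: mem_Times_iff)
    then have "j = j'" "k = k'"
      using quotient_disj[OF equiv_zigzag jk(1,3)] quotient_disj[OF equiv_zigzag jk(2,4)] by blast+
    with \<open>l \<noteq> l'\<close> l show False
      by simp
  qed
qed

lemma rB_subset_blocks: "rB \<subseteq> (\<Union>(j, k)\<in>(C // zigzag C rC) \<times> (D // zigzag D rD). block j k \<times> block j k)"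
proof clarify
  fix b b' assume "(b, b') \<in> rB"
  obtain a where a: "a \<in> A"
    using A_ne by blast
  obtain c d c' d' where cd: "f (a, b) = (c, d)" "f (a, b') = (c', d')"
    by (metis surj_pair)
  have bb': "b \<in> B" "b' \<in> B"
    using partial_order_on_memD[OF po_B \<open>(b, b') \<in> rB\<close>] by auto
  then have "(c, c') \<in> rC" "(d, d') \<in> rD" "c \<in> C" "c' \<in> C" "d \<in> D" "d' \<in> D"
    using order_iff[of "(a, b)" "(a, b')"] a \<open>(b, b') \<in> rB\<close> partial_order_on_reflD[OF po_A a]
      f_mem[OF a bb'(1)] f_mem[OF a bb'(2)] cd by auto
  then have "(c, c') \<in> zigzag C rC" "(d, d') \<in> zigzag D rD"
    unfolding zigzag_def by auto
  then have "b' \<in> block (zigzag C rC `` {c}) (zigzag D rD `` {d})"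
    unfolding block_def using bb'(2) cd(2) by (intro CollectI conjI bexI[OF _ a]) simp_all
  moreover note own = mem_own_block[OF a bb'(1), unfolded cd fst_conv snd_conv]
  ultimately have "(b, b') \<in> (\<lambda>(j, k). block j k \<times> block j k) (zigzag C rC `` {c}, zigzag D rD `` {d})"
    by simp
  then show "(b, b') \<in> (\<Union>(j, k)\<in>(C // zigzag C rC) \<times> (D // zigzag D rD). block j k \<times> block j k)"
    by (rule UN_I[rotated]) (use own(1,2) in blast)
qed

end

lemma order_iso_zigzag_classes_prod_Sigma:
  assumes "partial_order_on S r" "partial_order_on W rW"
    and "\<forall>j\<in>S // zigzag S r. partial_order_on (Y j) (rY j) \<and> finite (Y j)"
    and "\<forall>j\<in>S // zigzag S r. order_iso j (Restr r j) (W \<times> Y j) (prod_order rW (rY j))"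
  shows "order_iso S r (W \<times> Sigma (S // zigzag S r) Y) (prod_order rW (Sigma_order (S // zigzag S r) rY))"
proof -
  have "rY j \<subseteq> Y j \<times> Y j" if "j \<in> S // zigzag S r" for j
    using partial_order_onD(4)[OF conjunct1[OF bspec[OF assms(3) that]]] .
  moreover have "order_iso j r (W \<times> Y j) (prod_order rW (rY j))" if "j \<in> S // zigzag S r" for j
    using order_iso_Restr_left_iff[THEN iffD1, OF bspec[OF assms(4) that]] .
  ultimately have "order_iso (\<Union>j\<in>S // zigzag S r. j) r (W \<times> Sigma (S // zigzag S r) Y)
      (prod_order rW (Sigma_order (S // zigzag S r) rY))"
    by (rule order_iso_UN_prod_Sigma[OF zigzag_classes(2,3)[OF assms(1)] partial_order_onD(4)[OF assms(2)]])
  then show ?thesis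
    using zigzag_classes(1)[OF assms(1)] by simp
qed

context connected_factor_iso
begin

lemma common_refinement_blocks:
  assumes "finite A" "finite B" "finite C" "finite D"
  shows "common_refinement A rA (C // zigzag C rC) (\<lambda>j. j) (\<lambda>j. Restr rC j) (D // zigzag D rD) (\<lambda>k. k)
    (\<lambda>k. Restr rD k) block (\<lambda>j k. Restr rB (block j k))"
proof (rule common_refinement_exists)
  show "finite_connected_poset A rA"
    unfolding finite_connected_poset_def using po_A assms(1) conn_A A_ne by blast
  show "finite_connected_poset j (Restr rC j)" if "j \<in> C // zigzag C rC" for j
    by (rule finite_connected_poset_zigzag_class[OF po_C assms(3) that])
  show "finite_connected_poset k (Restr rD k)" if "k \<in> D // zigzag D rD" for k
    by (rule finite_connected_poset_zigzag_class[OF po_D assms(4) that])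
  show "finite_connected_poset (block j k) (Restr rB (block j k))"
    if "j \<in> C // zigzag C rC" "k \<in> D // zigzag D rD" for j k
    by (rule finite_connected_poset_block[OF assms(3,4) that])
qed (rule order_iso_block)

lemma order_iso_blocks_Sigma_prod_Sigma:
  assumes "\<forall>j\<in>C // zigzag C rC. partial_order_on (Y j) (rY j) \<and> finite (Y j)"
    and "\<forall>k\<in>D // zigzag D rD. partial_order_on (Z k) (rZ k) \<and> finite (Z k)"
    and "\<forall>j\<in>C // zigzag C rC. \<forall>k\<in>D // zigzag D rD.
      order_iso (block j k) (Restr rB (block j k)) (Y j \<times> Z k) (prod_order (rY j) (rZ k))"
  shows "order_iso B rB (Sigma (C // zigzag C rC) Y \<times> Sigma (D // zigzag D rD) Z)
    (prod_order (Sigma_order (C // zigzag C rC) rY) (Sigma_order (D // zigzag D rD) rZ))"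
proof -
  have "rY j \<subseteq> Y j \<times> Y j" if "j \<in> C // zigzag C rC" for j
    using partial_order_onD(4)[OF conjunct1[OF bspec[OF assms(1) that]]] .
  moreover have "rZ k \<subseteq> Z k \<times> Z k" if "k \<in> D // zigzag D rD" for k
    using partial_order_onD(4)[OF conjunct1[OF bspec[OF assms(2) that]]] .
  moreover have "order_iso (block j k) rB (Y j \<times> Z k) (prod_order (rY j) (rZ k))"
    if "j \<in> C // zigzag C rC" "k \<in> D // zigzag D rD" for j k
    using order_iso_Restr_left_iff[THEN iffD1, OF bspec[OF bspec[OF assms(3) that(1)] that(2)]] .
  ultimately have "order_iso (\<Union>(j, k)\<in>(C // zigzag C rC) \<times> (D // zigzag D rD). block j k) rB
      (Sigma (C // zigzag C rC) Y \<times> Sigma (D // zigzag D rD) Z)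
      (prod_order (Sigma_order (C // zigzag C rC) rY) (Sigma_order (D // zigzag D rD) rZ))"
    by (rule order_iso_UN_Sigma_prod_Sigma[OF disjoint_blocks rB_subset_blocks])
  then show ?thesis
    by (simp only: UN_blocks)
qed

lemma refinement_Sigma:
  assumes "finite A" "finite B" "finite C" "finite D"
  obtains W :: "nat set" and rW and X :: "nat set" and rX and Y :: "'c set \<Rightarrow> 'c set" and rY
    and Z :: "'d set \<Rightarrow> 'd set" and rZ
  where "partial_order_on W rW" "partial_order_on X rX"
    "\<forall>j\<in>C // zigzag C rC. partial_order_on (Y j) (rY j) \<and> finite (Y j)"
    "\<forall>k\<in>D // zigzag D rD. partial_order_on (Z k) (rZ k) \<and> finite (Z k)"
    "order_iso A rA (W \<times> X) (prod_order rW rX)"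
    "order_iso B rB (Sigma (C // zigzag C rC) Y \<times> Sigma (D // zigzag D rD) Z)
      (prod_order (Sigma_order (C // zigzag C rC) rY) (Sigma_order (D // zigzag D rD) rZ))"
    "order_iso C rC (W \<times> Sigma (C // zigzag C rC) Y) (prod_order rW (Sigma_order (C // zigzag C rC) rY))"
    "order_iso D rD (X \<times> Sigma (D // zigzag D rD) Z) (prod_order rX (Sigma_order (D // zigzag D rD) rZ))"
proof -
  obtain W :: "nat set" and rW and X :: "nat set" and rX and Y :: "'c set \<Rightarrow> 'c set" and rY
    and Z :: "'d set \<Rightarrow> 'd set" and rZ
    where W: "partial_order_on W rW" and X: "partial_order_on X rX"
      and Y: "\<forall>j\<in>C // zigzag C rC. partial_order_on (Y j) (rY j) \<and> finite (Y j)"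
      and Z: "\<forall>k\<in>D // zigzag D rD. partial_order_on (Z k) (rZ k) \<and> finite (Z k)"
      and A: "order_iso A rA (W \<times> X) (prod_order rW rX)"
      and C: "\<forall>j\<in>C // zigzag C rC. order_iso j (Restr rC j) (W \<times> Y j) (prod_order rW (rY j))"
      and D: "\<forall>k\<in>D // zigzag D rD. order_iso k (Restr rD k) (X \<times> Z k) (prod_order rX (rZ k))"
      and B: "\<forall>j\<in>C // zigzag C rC. \<forall>k\<in>D // zigzag D rD.
        order_iso (block j k) (Restr rB (block j k)) (Y j \<times> Z k) (prod_order (rY j) (rZ k))"
    using common_refinement_blocks[OF assms] unfolding common_refinement_def
    by (elim exE conjE) (rule that; assumption)
  from W X Y Z A order_iso_blocks_Sigma_prod_Sigma[OF Y Z B]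
    order_iso_zigzag_classes_prod_Sigma[OF po_C W Y C] order_iso_zigzag_classes_prod_Sigma[OF po_D X Z D]
  show thesis
    by (rule that)
qed

end

theorem theorem5:
  fixes A :: "'a set" and rA :: "('a \<times> 'a) set"
    and B :: "'b set" and rB :: "('b \<times> 'b) set"
    and C :: "'c set" and rC :: "('c \<times> 'c) set"
    and D :: "'d set" and rD :: "('d \<times> 'd) set"
  assumes "partial_order_on A rA" and "partial_order_on B rB"
    and "partial_order_on C rC" and "partial_order_on D rD"
    and "finite A" and "finite B" and "finite C" and "finite D"
    and "connected_poset A rA" and "A \<noteq> {}"
    and "order_iso (A \<times> B) (prod_order rA rB) (C \<times> D) (prod_order rC rD)"
  shows "\<exists>(W :: nat set) rW (X :: nat set) rX (Y :: nat set) rY (Z :: nat set) rZ.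
           partial_order_on W rW \<and> partial_order_on X rX \<and>
           partial_order_on Y rY \<and> partial_order_on Z rZ \<and>
           order_iso A rA (W \<times> X) (prod_order rW rX) \<and>
           order_iso B rB (Y \<times> Z) (prod_order rY rZ) \<and>
           order_iso C rC (W \<times> Y) (prod_order rW rY) \<and>
           order_iso D rD (X \<times> Z) (prod_order rX rZ)"
proof -
  obtain f where "bij_betw f (A \<times> B) (C \<times> D)"
    "\<And>x y. x \<in> A \<times> B \<Longrightarrow> y \<in> A \<times> B \<Longrightarrow> (x, y) \<in> prod_order rA rB \<longleftrightarrow> (f x, f y) \<in> prod_order rC rD"
    using assms(11) by (auto elim: order_isoE)
  with assms interpret connected_factor_iso A rA B rB C rC D rD f
    by unfold_locales
  let ?J = "C // zigzag C rC" and ?K = "D // zigzag D rD"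
  obtain W :: "nat set" and rW and X :: "nat set" and rX and Y :: "'c set \<Rightarrow> 'c set" and rY
    and Z :: "'d set \<Rightarrow> 'd set" and rZ
    where W: "partial_order_on W rW" and X: "partial_order_on X rX"
      and Y: "\<forall>j\<in>?J. partial_order_on (Y j) (rY j) \<and> finite (Y j)"
      and Z: "\<forall>k\<in>?K. partial_order_on (Z k) (rZ k) \<and> finite (Z k)"
      and iso_A: "order_iso A rA (W \<times> X) (prod_order rW rX)"
      and iso_B: "order_iso B rB (Sigma ?J Y \<times> Sigma ?K Z) (prod_order (Sigma_order ?J rY) (Sigma_order ?K rZ))"
      and iso_C: "order_iso C rC (W \<times> Sigma ?J Y) (prod_order rW (Sigma_order ?J rY))"
      and iso_D: "order_iso D rD (X \<times> Sigma ?K Z) (prod_order rX (Sigma_order ?K rZ))"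
    by (rule refinement_Sigma[OF assms(5-8)])
  obtain Y' :: "nat set" and rY' where Y': "partial_order_on Y' rY'"
    "order_iso (Sigma ?J Y) (Sigma_order ?J rY) Y' rY'"
    using Sigma_order_iso_nat[OF finite_quotient[OF assms(7) equiv_type[OF equiv_zigzag]] Y] .
  obtain Z' :: "nat set" and rZ' where Z': "partial_order_on Z' rZ'"
    "order_iso (Sigma ?K Z) (Sigma_order ?K rZ) Z' rZ'"
    using Sigma_order_iso_nat[OF finite_quotient[OF assms(8) equiv_type[OF equiv_zigzag]] Z] .
  show ?thesis
    by (rule exI[of _ W], rule exI[of _ rW], rule exI[of _ X], rule exI[of _ rX], rule exI[of _ Y'],
        rule exI[of _ rY'], rule exI[of _ Z'], rule exI[of _ rZ'])
      (use W X Y'(1) Z'(1) iso_A order_iso_trans[OF iso_B order_iso_prod[OF Y'(2) Z'(2)]]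
        order_iso_trans[OF iso_C order_iso_prod[OF order_iso_refl Y'(2)]]
        order_iso_trans[OF iso_D order_iso_prod[OF order_iso_refl Z'(2)]] in blast)
qed

end
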